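(* Let $G$ be an antiferromagnetic weighted graph on vertex set $[n]$, let $t$ be a positive integer, and let $\mathbf{a},\mathbf{b}\in(\mathbb{R}_{\ge0})^n$. Then \[ V_{K_t}(\mathbf{b},\mathbf{a},\dots,\mathbf{a};G)\cdot V_{K_t}(\mathbf{a},\mathbf{b},\dots,\mathbf{b};G)\ \ge\ V_{K_t}(\mathbf{a},\dots,\mathbf{a};G)\cdot V_{K_t}(\mathbf{b},\dots,\mathbf{b};G). \]
   Context: A weighted graph $G$ on $[n]$ is a symmetric matrix with nonnegative entries $G(i,j)$ (loops allowed); it is antiferromagnetic if it has at most one positive eigenvalue, counted with multiplicity. For a graph $H$ with $V(H)=[t]$ and vectors $\mathbf{x}_1,\dots,\mathbf{x}_t\in\mathbb{R}^n$, $\mathbf{x}_u=(x_{u,1},\dots,x_{u,n})$, the $G$-volume is \[V_H(\mathbf{x}_1,\dots,\mathbf{x}_t;G)=\sum_{\phi:[t]\to[n]}\prod_{uv\in E(H)}G(\phi(u),\phi(v))\prod_{u\in[t]}x_{u,\phi(u)}.\] Here $H=K_t$, the complete graph on $[t]$; each $V_{K_t}$ has $t$ vector arguments. *)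

theory Defs
  imports "Jordan_Normal_Form.Char_Poly" "HOL-Library.FuncSet"
begin

definition weighted_graph :: "nat \<Rightarrow> real mat \<Rightarrow> bool" where
  "weighted_graph n G \<longleftrightarrow> G \<in> carrier_mat n n \<and> G\<^sup>T = G \<and>
     (\<forall>i<n. \<forall>j<n. G $$ (i,j) \<ge> 0)"

definition num_pos_eigenvalues :: "real mat \<Rightarrow> nat" where
  "num_pos_eigenvalues G =
     (\<Sum>x\<in>{x. eigenvalue G x \<and> x > 0}. order x (char_poly G))"

definition antiferromagnetic :: "nat \<Rightarrow> real mat \<Rightarrow> bool" where
  "antiferromagnetic n G \<longleftrightarrow> weighted_graph n G \<and> num_pos_eigenvalues G \<le> 1"

text \<open>G-volume for the complete graph K_t on vertices {0..<t}; x u is the vector for vertex u,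
  with coordinates x u i for i < n.\<close>
definition volume_Kt :: "nat \<Rightarrow> nat \<Rightarrow> real mat \<Rightarrow> (nat \<Rightarrow> nat \<Rightarrow> real) \<Rightarrow> real" where
  "volume_Kt t n G x =
     (\<Sum>\<phi>\<in>{0..<t} \<rightarrow>\<^sub>E {0..<n}.
        (\<Prod>(u,v)\<in>{(u,v). u < v \<and> v < t}. G $$ (\<phi> u, \<phi> v)) *
        (\<Prod>u<t. x u (\<phi> u)))"

end

theory Submission
  imports Defs
begin

(* Write V(y) for V_{K_t}(y,...,y).  Multiplying V(a)^(t-1) V(b) <= V(b,a,...,a)^t with the same
   inequality for a and b exchanged gives the corollary.  That Minkowski-type inequality is the
   concavity of s -> V(a + s(b - a))^(1/t) on [0,1], which amounts to the reverse Cauchy-Schwarz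
   inequality for the Hessian form (v,w) -> V(v,w,y,...,y), y >= 0, i.e. to this form having at
   most one positive eigenvalue.

   For t = 2 the Hessian is G itself.  For the step from t to t + 1, peeling off the last vertex
   writes the Hessian H as sum_i y_i K_i where each K_i is a diagonal congruence of a Hessian for
   K_t, and the y-row of K_i is the i-th row of H; Cauchy-Schwarz for each K_i gives
   v^T H v <= sum_i y_i (H v)_i^2 / (H y)_i.  After rescaling by (H y)_i / y_i this says that no
   eigenvalue lies in (0,1), while y becomes a positive eigenvector for the eigenvalue 1; if G is
   positive on its support, a Perron-Frobenius argument shows that 1 is then the only positive
   eigenvalue.  The general case follows by applying this to G + c r r^T with r = G 1 (still with
   at most one positive eigenvalue) and letting c -> 0. *)

section \<open>Spectral decomposition of real symmetric arrays\<close>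

text \<open>Square arrays are functions \<open>nat \<Rightarrow> nat \<Rightarrow> real\<close> of which only the \<open>n \<times> n\<close> block is used, so
  that perturbations and Hessians of \<open>G\<close> can be written without matrix carriers.\<close>

definition sym_matrix :: "nat \<Rightarrow> (nat \<Rightarrow> nat \<Rightarrow> real) \<Rightarrow> bool" where
  "sym_matrix n A \<longleftrightarrow> (\<forall>i<n. \<forall>j<n. A i j = A j i)"

definition matmul :: "nat \<Rightarrow> (nat \<Rightarrow> nat \<Rightarrow> real) \<Rightarrow> (nat \<Rightarrow> nat \<Rightarrow> real) \<Rightarrow> nat \<Rightarrow> nat \<Rightarrow> real" where
  "matmul n A B i j = (\<Sum>k<n. A i k * B k j)"

definition spectral_decomposition ::
    "nat \<Rightarrow> (nat \<Rightarrow> nat \<Rightarrow> real) \<Rightarrow> (nat \<Rightarrow> nat \<Rightarrow> real) \<Rightarrow> (nat \<Rightarrow> real) \<Rightarrow> bool" where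
  "spectral_decomposition n A u \<mu> \<longleftrightarrow>
     (\<forall>k<n. \<forall>l<n. (\<Sum>i<n. u k i * u l i) = (if k = l then 1 else 0)) \<and>
     (\<forall>i<n. \<forall>j<n. (\<Sum>k<n. u k i * u k j) = (if i = j then 1 else 0)) \<and>
     (\<forall>i<n. \<forall>j<n. A i j = (\<Sum>k<n. \<mu> k * u k i * u k j))"

lemma spectral_decomposition_orthonormal:
  "spectral_decomposition n M u \<mu> \<Longrightarrow> k < n \<Longrightarrow> l < n \<Longrightarrow>
     (\<Sum>i<n. u k i * u l i) = (if k = l then 1 else 0)"
  unfolding spectral_decomposition_def by blast

lemma sum_kronecker_left [simp]:
  fixes f :: "nat \<Rightarrow> real"
  assumes "i < n"
  shows "(\<Sum>j<n. (if i = j then 1 else 0) * f j) = f i"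
  using assms by (simp add: if_distrib[of "\<lambda>c. c * _"] cong: if_cong)

lemma sum_kronecker_right [simp]:
  fixes f :: "nat \<Rightarrow> real"
  assumes "i < n"
  shows "(\<Sum>j<n. f j * (if j = i then 1 else 0)) = f i"
  using assms by (simp add: if_distrib[of "\<lambda>c. _ * c"] cong: if_cong)

lemma sum_product_scaled:
  "(\<Sum>i\<in>I. \<Sum>j\<in>J. c * a i * b j) = c * (\<Sum>i\<in>I. a i) * (\<Sum>j\<in>J. b j :: real)"
proof -
  have "c * (\<Sum>i\<in>I. a i) = (\<Sum>i\<in>I. c * a i)" by (rule sum_distrib_left)
  thus ?thesis by (simp only: sum_product)
qed

lemma sum_rotate3:
  "(\<Sum>a\<in>A. \<Sum>b\<in>B. \<Sum>c\<in>C. F a b c) = (\<Sum>b\<in>B. \<Sum>c\<in>C. \<Sum>a\<in>A. F a b c)"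
  by (subst sum.swap) (rule sum.cong[OF refl], rule sum.swap)

lemma matmul_assoc: "matmul n (matmul n A B) C i j = matmul n A (matmul n B C) i j"
  unfolding matmul_def by (simp add: sum_distrib_left sum_distrib_right mult.assoc) (rule sum.swap)

lemma matmul_cong_right: "(\<And>k. k < m \<Longrightarrow> B k j = B' k j) \<Longrightarrow> matmul m A B i j = matmul m A B' i j"
  unfolding matmul_def by auto

lemma matmul_id_left:
  assumes "\<forall>i<m. \<forall>j<m. P i j = (if i = j then 1 else 0)" "i < m"
  shows "matmul m P X i j = X i j"
proof -
  have "matmul m P X i j = (\<Sum>k<m. (if i = k then 1 else 0) * X k j)"
    unfolding matmul_def using assms by (intro sum.cong) auto
  thus ?thesis using assms(2) by simp
qed

lemma matmul_id_right:
  assumes "\<forall>i<m. \<forall>j<m. P i j = (if i = j then 1 else 0)" "j < m"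
  shows "matmul m X P i j = X i j"
proof -
  have "matmul m X P i j = (\<Sum>k<m. X i k * (if k = j then 1 else 0))"
    unfolding matmul_def using assms by (intro sum.cong) auto
  thus ?thesis using assms(2) by simp
qed

lemma cnj_eigenvalue_of_real_symmetric:
  fixes A :: "real mat"
  assumes A: "A \<in> carrier_mat n n" and sym: "A\<^sup>T = A"
    and v: "v \<in> carrier_vec n" "v \<noteq> 0\<^sub>v n" "map_mat complex_of_real A *\<^sub>v v = a \<cdot>\<^sub>v v"
  shows "cnj a = a"
proof -
  define S where "S = (\<Sum>i<n. cnj (v $ i) * (map_mat complex_of_real A *\<^sub>v v) $ i)"
  define N where "N = (\<Sum>i<n. cnj (v $ i) * v $ i)"
  have aN: "S = a * N"
    unfolding S_def N_def v(3) using v(1) by (simp add: sum_distrib_left algebra_simps)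
  have S2: "S = (\<Sum>i<n. \<Sum>j<n. cnj (v $ i) * of_real (A $$ (i,j)) * v $ j)"
    unfolding S_def using v(1) A
    by (simp add: mult_mat_vec_def scalar_prod_def sum_distrib_left atLeast0LessThan algebra_simps)
  have "cnj S = (\<Sum>j<n. \<Sum>i<n. v $ i * of_real (A $$ (i,j)) * cnj (v $ j))"
    unfolding S2 by (simp add: cnj_sum) (rule sum.swap)
  also have "\<dots> = S" unfolding S2
  proof (intro sum.cong refl)
    fix i j assume "i \<in> {..<n}" "j \<in> {..<n}"
    hence "A $$ (j, i) = A $$ (i, j)"
      using arg_cong[OF sym, of "\<lambda>M. M $$ (i,j)"] A by auto
    thus "v $ j * of_real (A $$ (j, i)) * cnj (v $ i) = cnj (v $ i) * of_real (A $$ (i, j)) * v $ j"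
      by simp
  qed
  finally have Sreal: "cnj S = S" .
  have Nreal: "N = of_real (\<Sum>i<n. (cmod (v $ i))\<^sup>2)"
    unfolding N_def of_real_sum by (intro sum.cong refl) (metis complex_norm_square mult.commute of_real_power)
  obtain i0 where i0: "i0 < n" "v $ i0 \<noteq> 0"
    using v(1,2) by (metis carrier_vecD eq_vecI index_zero_vec(1) index_zero_vec(2))
  have "(\<Sum>i<n. (cmod (v $ i))\<^sup>2) > 0"
    by (rule sum_pos2[of _ i0]) (use i0 in auto)
  hence "N \<noteq> 0" unfolding Nreal by (metis of_real_eq_0_iff less_irrefl)
  moreover have "cnj a * N = a * N" using Sreal aN Nreal by (metis complex_cnj_mult complex_cnj_complex_of_real)
  ultimately show "cnj a = a" by simp
qed

lemma real_symmetric_mat_has_eigenvalue: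
  fixes A :: "real mat"
  assumes A: "A \<in> carrier_mat n n" and sym: "A\<^sup>T = A" and n: "n > 0"
  shows "\<exists>r. eigenvalue A r"
proof -
  let ?Ac = "map_mat complex_of_real A"
  have Ac: "?Ac \<in> carrier_mat n n" using A by auto
  from char_poly_factorized[OF Ac] obtain as where
    cp: "char_poly ?Ac = (\<Prod>a\<leftarrow>as. [:- a, 1:])" and len: "length as = n" by blast
  from len n obtain a where a: "a \<in> set as" by (cases as) auto
  have root: "poly (char_poly ?Ac) a = 0" unfolding cp using a
    by (simp add: poly_prod_list prod_list_zero_iff)
  hence "eigenvalue ?Ac a" using eigenvalue_root_char_poly[OF Ac] by simp
  then obtain v where v: "v \<in> carrier_vec n" "v \<noteq> 0\<^sub>v n" "?Ac *\<^sub>v v = a \<cdot>\<^sub>v v"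
    unfolding eigenvalue_def eigenvector_def using Ac by auto
  have "a = of_real (Re a)"
    using cnj_eigenvalue_of_real_symmetric[OF A sym v] by (metis Reals_cnj_iff Reals_cases of_real_Re)
  hence "poly (map_poly complex_of_real (char_poly A)) (of_real (Re a)) = 0"
    using root of_real_hom.char_poly_hom[OF A] by metis
  hence "poly (char_poly A) (Re a) = 0" by (simp add: of_real_hom.poly_map_poly)
  thus ?thesis using eigenvalue_root_char_poly[OF A] by blast
qed

lemma sym_matrix_has_unit_eigenvector:
  assumes "sym_matrix n A" "n > 0"
  shows "\<exists>r v. (\<Sum>i<n. (v i)\<^sup>2) = 1 \<and> (\<forall>i<n. (\<Sum>j<n. A i j * v j) = r * v i)"
proof -
  let ?A = "mat n n (\<lambda>(i,j). A i j)"
  have Ac: "?A \<in> carrier_mat n n" by simp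
  have "?A\<^sup>T = ?A" using assms(1) unfolding sym_matrix_def by (intro eq_matI) auto
  from real_symmetric_mat_has_eigenvalue[OF Ac this assms(2)] obtain r where "eigenvalue ?A r" by blast
  then obtain v where v: "v \<in> carrier_vec n" "v \<noteq> 0\<^sub>v n" "?A *\<^sub>v v = r \<cdot>\<^sub>v v"
    unfolding eigenvalue_def eigenvector_def by auto
  have ev: "(\<Sum>j<n. A i j * v $ j) = r * v $ i" if "i < n" for i
  proof -
    have "(?A *\<^sub>v v) $ i = r * v $ i" using v(3) that v(1) by simp
    thus ?thesis using that v(1) by (simp add: mult_mat_vec_def scalar_prod_def atLeast0LessThan)
  qed
  obtain i0 where i0: "i0 < n" "v $ i0 \<noteq> 0"
    using v(1,2) by (metis carrier_vecD eq_vecI index_zero_vec(1) index_zero_vec(2))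
  define N where "N = (\<Sum>i<n. (v $ i)\<^sup>2)"
  have N: "N > 0" unfolding N_def by (rule sum_pos2[of _ i0]) (use i0 in auto)
  define w where "w i = v $ i / sqrt N" for i
  have "(\<Sum>i<n. (w i)\<^sup>2) = (\<Sum>i<n. (v $ i)\<^sup>2 / N)"
    unfolding w_def using N by (simp add: power_divide)
  also have "\<dots> = 1" using N by (simp add: sum_divide_distrib[symmetric] N_def)
  finally have "(\<Sum>i<n. (w i)\<^sup>2) = 1" .
  moreover have "\<forall>i<n. (\<Sum>j<n. A i j * w j) = r * w i"
    using ev unfolding w_def by (simp add: sum_divide_distrib[symmetric] mult.assoc times_divide_eq_right)
  ultimately show ?thesis by blast
qed

lemma reflection_matmul_self:
  fixes w :: "nat \<Rightarrow> real"
  assumes ww: "(\<Sum>k<m. w k * w k) = c" and c: "c > 0" and ij: "i < m" "j < m"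
  defines "Q \<equiv> \<lambda>i j. (if i = j then 1 else 0) - 2 * w i * w j / c"
  shows "matmul m Q Q i j = (if i = j then 1 else 0)"
proof -
  let ?d = "\<lambda>a b. if a = b then 1 else (0::real)"
  have ex: "Q i k * Q k j = ?d i k * ?d k j - ?d i k * (2 * w k * w j / c) - (2 * w i * w k / c) * ?d k j
      + 4 * w i * w j / c^2 * (w k * w k)" for k
    unfolding Q_def by (simp add: algebra_simps power2_eq_square)
  have "matmul m Q Q i j = (\<Sum>k<m. ?d i k * ?d k j) - (\<Sum>k<m. ?d i k * (2 * w k * w j / c))
     - (\<Sum>k<m. (2 * w i * w k / c) * ?d k j) + (\<Sum>k<m. 4 * w i * w j / c^2 * (w k * w k))"
    unfolding matmul_def ex by (simp add: sum.distrib sum_subtractf)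
  also have "(\<Sum>k<m. ?d i k * ?d k j) = ?d i j" by (rule sum_kronecker_left[OF ij(1)])
  also have "(\<Sum>k<m. ?d i k * (2 * w k * w j / c)) = 2 * w i * w j / c"
    by (rule sum_kronecker_left[OF ij(1)])
  also have "(\<Sum>k<m. (2 * w i * w k / c) * ?d k j) = 2 * w i * w j / c"
    by (rule sum_kronecker_right[OF ij(2)])
  also have "(\<Sum>k<m. 4 * w i * w j / c^2 * (w k * w k)) = 4 * w i * w j / c^2 * c"
    by (subst sum_distrib_left[symmetric]) (simp only: ww)
  finally show ?thesis using c by (simp add: power2_eq_square field_simps)
qed

lemma householder_reflection_exists:
  fixes v :: "nat \<Rightarrow> real"
  assumes unit: "(\<Sum>i<Suc n. (v i)\<^sup>2) = 1"
  shows "\<exists>Q. sym_matrix (Suc n) Q \<and> (\<forall>i<Suc n. \<forall>j<Suc n. matmul (Suc n) Q Q i j = (if i = j then 1 else 0))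
             \<and> (\<forall>i<Suc n. Q i n = v i)"
proof (cases "v n = 1")
  case True
  have "(\<Sum>i<n. (v i)\<^sup>2) = 0" using unit True by simp
  hence z: "\<forall>i<n. v i = 0" by (simp add: sum_nonneg_eq_0_iff)
  define Q where "Q i j = (if i = j then 1 else (0::real))" for i j :: nat
  have "sym_matrix (Suc n) Q" unfolding sym_matrix_def Q_def by auto
  moreover have "matmul (Suc n) Q Q i j = (if i = j then 1 else 0)" if "i < Suc n" "j < Suc n" for i j
    unfolding matmul_def Q_def using that by (simp add: sum.delta)
  moreover have "Q i n = v i" if "i < Suc n" for i
    using that z True unfolding Q_def by (cases "i = n") auto
  ultimately show ?thesis by blast
next
  case False
  define w where "w i = v i - (if i = n then 1 else 0)" for i
  have "(v n)\<^sup>2 \<le> (\<Sum>i<Suc n. (v i)\<^sup>2)" by (rule member_le_sum) auto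
  hence "(v n)\<^sup>2 \<le> 1\<^sup>2" using unit by simp
  hence "v n \<le> 1" by (rule power2_le_imp_le) simp
  define c where "c = 2 - 2 * v n"
  have c: "c > 0" using \<open>v n \<le> 1\<close> False unfolding c_def by simp
  have ww: "(\<Sum>i<Suc n. w i * w i) = c"
  proof -
    have "(\<Sum>i<Suc n. w i * w i) = (\<Sum>i<Suc n. (v i)\<^sup>2 - 2 * (if i = n then v i else 0) + (if i = n then 1 else 0))"
      unfolding w_def by (intro sum.cong refl) (auto simp: power2_eq_square algebra_simps)
    also have "\<dots> = 1 - 2 * v n + 1" using unit by (simp add: sum.distrib sum_subtractf sum.delta')
    finally show ?thesis unfolding c_def by simp
  qed
  define Q where "Q i j = (if i = j then 1 else 0) - 2 * w i * w j / c" for i j :: nat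
  have "sym_matrix (Suc n) Q" unfolding sym_matrix_def Q_def by (auto simp: mult.commute)
  moreover have "matmul (Suc n) Q Q i j = (if i = j then 1 else 0)" if "i < Suc n" "j < Suc n" for i j
    unfolding Q_def by (rule reflection_matmul_self[OF ww c that])
  moreover have "Q i n = v i" if "i < Suc n" for i
  proof -
    have "Q i n = (if i = n then 1 else 0) - 2 * w i * (v n - 1) / (2 - 2 * v n)"
      unfolding Q_def c_def by (simp add: w_def)
    also have "\<dots> = (if i = n then 1 else 0) + w i" using c unfolding c_def by (simp add: field_simps)
    finally show ?thesis unfolding w_def by simp
  qed
  ultimately show ?thesis by blast
qed

lemma sym_matrix_conj:
  assumes Qs: "sym_matrix m Q" and As: "sym_matrix m A"
  shows "sym_matrix m (matmul m (matmul m Q A) Q)"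
  unfolding sym_matrix_def
proof (intro allI impI)
  fix i j assume ij: "i < m" "j < m"
  have Qsym: "Q i p = Q p i" if "i < m" "p < m" for i p using Qs that unfolding sym_matrix_def by auto
  have Asym: "A i p = A p i" if "i < m" "p < m" for i p using As that unfolding sym_matrix_def by auto
  have exp: "matmul m (matmul m Q A) Q i j = (\<Sum>p<m. \<Sum>q<m. Q i p * A p q * Q q j)" for i j
    unfolding matmul_def by (simp only: sum_distrib_right) (rule sum.swap)
  have "(\<Sum>p<m. \<Sum>q<m. Q i p * A p q * Q q j) = (\<Sum>q<m. \<Sum>p<m. Q j q * A q p * Q p i)"
    by (subst sum.swap) (intro sum.cong refl, auto simp: Qsym Asym ij)
  thus "matmul m (matmul m Q A) Q i j = matmul m (matmul m Q A) Q j i" unfolding exp .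
qed

lemma spectral_decomposition_conj:
  assumes Qs: "sym_matrix m Q" and QQ: "\<forall>i<m. \<forall>j<m. matmul m Q Q i j = (if i = j then 1 else 0)"
    and dec: "spectral_decomposition m B u \<mu>"
  shows "spectral_decomposition m (matmul m (matmul m Q B) Q) (\<lambda>k i. \<Sum>p<m. Q i p * u k p) \<mu>"
proof -
  define u2 where "u2 k i = (\<Sum>p<m. Q i p * u k p)" for k i
  have on: "(\<Sum>i<m. u k i * u l i) = (if k = l then 1 else 0)" if "k < m" "l < m" for k l
    using dec that unfolding spectral_decomposition_def by blast
  have co: "(\<Sum>k<m. u k i * u k j) = (if i = j then 1 else 0)" if "i < m" "j < m" for i j
    using dec that unfolding spectral_decomposition_def by blast
  have B: "B i j = (\<Sum>k<m. \<mu> k * u k i * u k j)" if "i < m" "j < m" for i j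
    using dec that unfolding spectral_decomposition_def by blast
  have Qsym: "Q i p = Q p i" if "i < m" "p < m" for i p using Qs that unfolding sym_matrix_def by auto
  have "(\<Sum>i<m. u2 k i * u2 l i) = (if k = l then 1 else 0)" if kl: "k < m" "l < m" for k l
  proof -
    have "(\<Sum>i<m. u2 k i * u2 l i) = (\<Sum>p<m. \<Sum>q<m. \<Sum>i<m. Q i p * u k p * (Q i q * u l q))"
      unfolding u2_def by (simp only: sum_product) (rule sum_rotate3)
    also have "\<dots> = (\<Sum>p<m. \<Sum>q<m. u k p * u l q * matmul m Q Q p q)"
      unfolding matmul_def by (intro sum.cong refl) (auto simp: sum_distrib_left Qsym algebra_simps)
    also have "\<dots> = (\<Sum>p<m. \<Sum>q<m. u k p * u l q * (if p = q then 1 else 0))"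
      using QQ by (intro sum.cong refl) auto
    also have "\<dots> = (\<Sum>p<m. u k p * u l p)" by (intro sum.cong refl) (auto simp: mult.commute)
    finally show ?thesis using on kl by simp
  qed
  moreover have "(\<Sum>k<m. u2 k i * u2 k j) = (if i = j then 1 else 0)" if ij: "i < m" "j < m" for i j
  proof -
    have "(\<Sum>k<m. u2 k i * u2 k j) = (\<Sum>k<m. \<Sum>p<m. \<Sum>q<m. Q i p * u k p * (Q j q * u k q))"
      unfolding u2_def by (intro sum.cong refl) (rule sum_product)
    also have "\<dots> = (\<Sum>p<m. \<Sum>q<m. \<Sum>k<m. Q i p * u k p * (Q j q * u k q))"
      by (rule sum_rotate3)
    also have "\<dots> = (\<Sum>p<m. \<Sum>q<m. Q i p * Q j q * (\<Sum>k<m. u k p * u k q))"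
      by (intro sum.cong refl) (auto simp: sum_distrib_left algebra_simps)
    also have "\<dots> = (\<Sum>p<m. \<Sum>q<m. Q i p * Q j q * (if p = q then 1 else 0))"
      using co by (intro sum.cong refl) auto
    also have "\<dots> = (\<Sum>p<m. Q i p * Q j p)"
      by (intro sum.cong refl) (simp add: if_distrib[of "\<lambda>c. _ * c"] cong: if_cong)
    also have "\<dots> = (\<Sum>p<m. Q i p * Q p j)" by (intro sum.cong refl) (auto simp: Qsym ij)
    finally show ?thesis using QQ ij unfolding matmul_def by auto
  qed
  moreover have "matmul m (matmul m Q B) Q i j = (\<Sum>k<m. \<mu> k * u2 k i * u2 k j)" if ij: "i < m" "j < m" for i j
  proof -
    have "matmul m (matmul m Q B) Q i j = (\<Sum>q<m. \<Sum>p<m. Q i p * B p q * Q q j)"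
      unfolding matmul_def by (simp add: sum_distrib_right)
    also have "\<dots> = (\<Sum>q<m. \<Sum>p<m. \<Sum>k<m. \<mu> k * (Q i p * u k p) * (Q j q * u k q))"
      using B ij by (intro sum.cong refl) (auto simp: sum_distrib_left sum_distrib_right Qsym algebra_simps)
    also have "\<dots> = (\<Sum>k<m. \<Sum>p<m. \<Sum>q<m. \<mu> k * (Q i p * u k p) * (Q j q * u k q))"
      by (subst sum.swap) (rule sum_rotate3[symmetric])
    also have "\<dots> = (\<Sum>k<m. \<mu> k * u2 k i * u2 k j)"
      unfolding u2_def by (intro sum.cong refl) (rule sum_product_scaled)
    finally show ?thesis .
  qed
  ultimately show ?thesis unfolding spectral_decomposition_def u2_def by blast
qed

lemma matmul_conj_involution:
  assumes QQ: "\<forall>i<m. \<forall>j<m. matmul m Q Q i j = (if i = j then 1 else 0)" and ij: "i < m" "j < m"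
  shows "matmul m (matmul m Q (matmul m (matmul m Q A) Q)) Q i j = A i j"
proof -
  have "matmul m (matmul m Q (matmul m (matmul m Q A) Q)) Q i j
      = matmul m Q (matmul m (matmul m (matmul m Q A) Q) Q) i j"
    by (rule matmul_assoc)
  also have "\<dots> = matmul m Q (matmul m (matmul m Q A) (matmul m Q Q)) i j"
    by (intro matmul_cong_right) (rule matmul_assoc)
  also have "\<dots> = matmul m Q (matmul m Q A) i j"
    by (intro matmul_cong_right matmul_id_right[OF QQ ij(2)])
  also have "\<dots> = matmul m (matmul m Q Q) A i j"
    by (rule matmul_assoc[symmetric])
  also have "\<dots> = A i j" by (rule matmul_id_left[OF QQ ij(1)])
  finally show ?thesis .
qed

lemma spectral_decomposition_extend:
  assumes dec: "spectral_decomposition n B u \<mu>" and sym: "sym_matrix (Suc n) B"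
    and last: "\<And>i. i < Suc n \<Longrightarrow> B i n = (if i = n then r else 0)"
  shows "spectral_decomposition (Suc n) B
           (\<lambda>k i. if k < n then (if i < n then u k i else 0) else (if i = n then 1 else 0))
           (\<lambda>k. if k < n then \<mu> k else r)"
  unfolding spectral_decomposition_def
proof (intro conjI allI impI)
  fix k l assume "k < Suc n" "l < Suc n"
  thus "(\<Sum>i<Suc n. (if k < n then (if i < n then u k i else 0) else (if i = n then 1 else 0))
      * (if l < n then (if i < n then u l i else 0) else (if i = n then 1 else 0))) = (if k = l then 1 else 0)"
    using dec unfolding spectral_decomposition_def by (auto simp: less_Suc_eq)
next
  fix i j assume "i < Suc n" "j < Suc n"
  thus "(\<Sum>k<Suc n. (if k < n then (if i < n then u k i else 0) else (if i = n then 1 else 0))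
      * (if k < n then (if j < n then u k j else 0) else (if j = n then 1 else 0))) = (if i = j then 1 else 0)"
    using dec unfolding spectral_decomposition_def by (auto simp: less_Suc_eq)
next
  fix i j assume ij: "i < Suc n" "j < Suc n"
  show "B i j = (\<Sum>k<Suc n. (if k < n then \<mu> k else r)
      * (if k < n then (if i < n then u k i else 0) else (if i = n then 1 else 0))
      * (if k < n then (if j < n then u k j else 0) else (if j = n then 1 else 0)))"
  proof (cases "i < n \<and> j < n")
    case True
    thus ?thesis using dec unfolding spectral_decomposition_def by auto
  next
    case False
    hence "B i j = (if i = n \<and> j = n then r else 0)"
      using last ij sym unfolding sym_matrix_def by (metis lessI less_antisym)
    thus ?thesis using ij False by (auto simp: less_Suc_eq)
  qed
qed

text \<open>Split off a unit eigenvector \<open>v\<close> by a reflection mapping \<open>e\<^sub>n\<close> to \<open>v\<close>, then recurse on the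
  leading \<open>n \<times> n\<close> block.\<close>
theorem spectral_decomposition_exists:
  "sym_matrix n A \<Longrightarrow> \<exists>u \<mu>. spectral_decomposition n A u \<mu>"
proof (induction n arbitrary: A)
  case 0
  show ?case unfolding spectral_decomposition_def by auto
next
  case (Suc n)
  let ?m = "Suc n"
  from sym_matrix_has_unit_eigenvector[OF Suc.prems] obtain r v where
    v1: "(\<Sum>i<?m. (v i)\<^sup>2) = 1" and ev: "\<forall>i<?m. (\<Sum>j<?m. A i j * v j) = r * v i" by auto
  from householder_reflection_exists[OF v1] obtain Q where Qs: "sym_matrix ?m Q"
    and QQ: "\<forall>i<?m. \<forall>j<?m. matmul ?m Q Q i j = (if i = j then 1 else 0)" and Qv: "\<forall>i<?m. Q i n = v i"
    by blast
  define B where "B = matmul ?m (matmul ?m Q A) Q"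
  have Bs: "sym_matrix ?m B" unfolding B_def by (rule sym_matrix_conj[OF Qs Suc.prems])
  have Bexp: "B i j = (\<Sum>p<?m. \<Sum>q<?m. Q i p * A p q * Q q j)" for i j
    unfolding B_def matmul_def by (simp only: sum_distrib_right) (rule sum.swap)
  have Bn: "B i n = (if i = n then r else 0)" if i: "i < ?m" for i
  proof -
    have "B i n = (\<Sum>p<?m. \<Sum>q<?m. Q i p * (A p q * v q))"
      unfolding Bexp using Qv by (intro sum.cong refl) (simp only: mult.assoc, simp)
    also have "\<dots> = (\<Sum>p<?m. Q i p * (r * v p))"
      using ev by (simp only: sum_distrib_left[symmetric]) (intro sum.cong refl, auto)
    also have "\<dots> = r * (\<Sum>p<?m. Q i p * Q p n)"
      using Qv by (simp add: sum_distrib_left algebra_simps del: lessThan_Suc)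
    also have "\<dots> = r * (if i = n then 1 else 0)" using QQ i unfolding matmul_def by auto
    finally show ?thesis by simp
  qed
  have "sym_matrix n B" using Bs unfolding sym_matrix_def by auto
  from Suc.IH[OF this] obtain u' \<mu>' where "spectral_decomposition n B u' \<mu>'" by blast
  from spectral_decomposition_conj[OF Qs QQ spectral_decomposition_extend[OF this Bs Bn]] obtain u \<mu> where
    "spectral_decomposition ?m (matmul ?m (matmul ?m Q B) Q) u \<mu>" by blast
  moreover have "matmul ?m (matmul ?m Q B) Q i j = A i j" if "i < ?m" "j < ?m" for i j
    unfolding B_def using matmul_conj_involution[OF QQ that] .
  ultimately have "spectral_decomposition ?m A u \<mu>"
    unfolding spectral_decomposition_def by auto
  thus ?case by blast
qed

section \<open>Hyperbolic quadratic forms\<close>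

definition bform :: "nat \<Rightarrow> (nat \<Rightarrow> nat \<Rightarrow> real) \<Rightarrow> (nat \<Rightarrow> real) \<Rightarrow> (nat \<Rightarrow> real) \<Rightarrow> real" where
  "bform n B x y = (\<Sum>i<n. \<Sum>j<n. x i * B i j * y j)"

text \<open>The reverse Cauchy--Schwarz inequality; for symmetric \<open>B\<close> it holds iff \<open>B\<close> has at most one
  positive eigenvalue.\<close>
definition hyperbolic :: "nat \<Rightarrow> (nat \<Rightarrow> nat \<Rightarrow> real) \<Rightarrow> bool" where
  "hyperbolic n B \<longleftrightarrow>
     (\<forall>x v. bform n B x x > 0 \<longrightarrow> bform n B x x * bform n B v v \<le> (bform n B x v)\<^sup>2)"

lemma hyperbolicD:
  "hyperbolic n B \<Longrightarrow> bform n B x x > 0 \<Longrightarrow> bform n B x x * bform n B v v \<le> (bform n B x v)\<^sup>2"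
  unfolding hyperbolic_def by blast

lemma bform_commute: "sym_matrix n B \<Longrightarrow> bform n B x y = bform n B y x"
  unfolding bform_def sym_matrix_def by (subst sum.swap) (auto intro!: sum.cong simp: mult.commute)

lemma bform_combination:
  assumes "sym_matrix n B"
  shows "bform n B (\<lambda>i. a * x i + b * y i) (\<lambda>i. a * x i + b * y i)
       = a\<^sup>2 * bform n B x x + 2 * a * b * bform n B x y + b\<^sup>2 * bform n B y y"
proof -
  have "bform n B (\<lambda>i. a * x i + b * y i) (\<lambda>i. a * x i + b * y i)
      = a * a * bform n B x x + a * b * bform n B x y + b * a * bform n B y x + b * b * bform n B y y"
    unfolding bform_def by (simp add: algebra_simps sum.distrib sum_distrib_left)
  thus ?thesis using bform_commute[OF assms, of y x] by (simp add: power2_eq_square algebra_simps)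
qed

lemma discriminant_nonneg_if_nonpos_value:
  fixes a b c l :: real
  assumes "a > 0" "a * l\<^sup>2 - 2 * b * l + c \<le> 0"
  shows "a * c \<le> b\<^sup>2"
proof -
  have "a * (a * l\<^sup>2 - 2 * b * l + c) = (a * l - b)\<^sup>2 - (b\<^sup>2 - a * c)"
    by (simp add: power2_eq_square algebra_simps)
  moreover have "a * (a * l\<^sup>2 - 2 * b * l + c) \<le> 0"
    using assms by (intro mult_nonneg_nonpos) auto
  ultimately show ?thesis by (smt (verit) zero_le_power2)
qed

lemma hyperbolic_if_nonpos_on_hyperplane:
  assumes sym: "sym_matrix n B" and nonpos: "\<And>v. (\<Sum>i<n. h i * v i) = 0 \<Longrightarrow> bform n B v v \<le> 0"
  shows "hyperbolic n B"
  unfolding hyperbolic_def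
proof (intro allI impI)
  fix x v assume x: "bform n B x x > 0"
  define hx where "hx = (\<Sum>i<n. h i * x i)"
  have hx: "hx \<noteq> 0" using nonpos x unfolding hx_def by force
  define l where "l = (\<Sum>i<n. h i * v i) / hx"
  have "(\<Sum>i<n. h i * ((- l) * x i + 1 * v i)) = (\<Sum>i<n. h i * v i) - l * hx"
    unfolding hx_def by (simp add: algebra_simps sum.distrib sum_subtractf sum_distrib_left)
  also have "\<dots> = 0" unfolding l_def using hx by simp
  finally have "bform n B (\<lambda>i. (- l) * x i + 1 * v i) (\<lambda>i. (- l) * x i + 1 * v i) \<le> 0"
    by (rule nonpos)
  hence "bform n B x x * l\<^sup>2 - 2 * bform n B x v * l + bform n B v v \<le> 0"
    unfolding bform_combination[OF sym] by (simp add: algebra_simps)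
  thus "bform n B x x * bform n B v v \<le> (bform n B x v)\<^sup>2"
    by (rule discriminant_nonneg_if_nonpos_value[OF x])
qed

lemma hyperbolic_cong:
  assumes "hyperbolic n B" "\<And>i j. i < n \<Longrightarrow> j < n \<Longrightarrow> B i j = B' i j"
  shows "hyperbolic n B'"
proof -
  have "bform n B x v = bform n B' x v" for x v unfolding bform_def using assms(2) by auto
  thus ?thesis using assms(1) unfolding hyperbolic_def by simp
qed

lemma hyperbolic_diag_congruence:
  assumes "hyperbolic n B"
  shows "hyperbolic n (\<lambda>j k. d j * B j k * d k)"
proof -
  have "bform n (\<lambda>j k. d j * B j k * d k) x v = bform n B (\<lambda>j. d j * x j) (\<lambda>j. d j * v j)" for x v
    unfolding bform_def by (simp add: algebra_simps)
  thus ?thesis using assms unfolding hyperbolic_def by simp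
qed

lemma bform_tendsto:
  assumes "\<And>i j. ((\<lambda>k. B k i j) \<longlongrightarrow> B0 i j) F"
  shows "((\<lambda>k. bform n (B k) x v) \<longlongrightarrow> bform n B0 x v) F"
  unfolding bform_def by (intro tendsto_intros assms)

lemma hyperbolic_limit:
  assumes h: "\<And>k. hyperbolic n (B k)" and lim: "\<And>i j. (\<lambda>k. B k i j) \<longlonglongrightarrow> B0 i j"
  shows "hyperbolic n B0"
  unfolding hyperbolic_def
proof (intro allI impI)
  fix x v assume pos: "bform n B0 x x > 0"
  have l1: "(\<lambda>k. bform n (B k) x x) \<longlonglongrightarrow> bform n B0 x x"
    and l2: "(\<lambda>k. bform n (B k) v v) \<longlonglongrightarrow> bform n B0 v v"
    and l3: "(\<lambda>k. bform n (B k) x v) \<longlonglongrightarrow> bform n B0 x v"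
    by (rule bform_tendsto[OF lim])+
  have "eventually (\<lambda>k. bform n (B k) x x > 0) sequentially"
    by (rule order_tendstoD(1)[OF l1 pos])
  hence "eventually (\<lambda>k. bform n (B k) x x * bform n (B k) v v \<le> (bform n (B k) x v)\<^sup>2) sequentially"
    by eventually_elim (use h in \<open>auto simp: hyperbolic_def\<close>)
  moreover have "(\<lambda>k. bform n (B k) x x * bform n (B k) v v) \<longlonglongrightarrow> bform n B0 x x * bform n B0 v v"
    by (intro tendsto_intros l1 l2)
  moreover have "(\<lambda>k. (bform n (B k) x v)\<^sup>2) \<longlonglongrightarrow> (bform n B0 x v)\<^sup>2"
    by (intro tendsto_intros l3)
  ultimately show "bform n B0 x x * bform n B0 v v \<le> (bform n B0 x v)\<^sup>2"
    by (intro tendsto_le[of sequentially]) auto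
qed

lemma bform_spectral:
  assumes "spectral_decomposition n B u \<mu>"
  shows "bform n B v w = (\<Sum>k<n. \<mu> k * (\<Sum>i<n. u k i * v i) * (\<Sum>j<n. u k j * w j))"
proof -
  have dec: "B i j = (\<Sum>k<n. \<mu> k * u k i * u k j)" if "i < n" "j < n" for i j
    using assms that unfolding spectral_decomposition_def by blast
  have "bform n B v w = (\<Sum>i<n. \<Sum>j<n. \<Sum>k<n. \<mu> k * (u k i * v i) * (u k j * w j))"
    unfolding bform_def using dec
    by (intro sum.cong refl) (auto simp: sum_distrib_left sum_distrib_right algebra_simps)
  also have "\<dots> = (\<Sum>k<n. \<Sum>i<n. \<Sum>j<n. \<mu> k * (u k i * v i) * (u k j * w j))"
    by (rule sum_rotate3[symmetric])
  also have "\<dots> = (\<Sum>k<n. \<mu> k * (\<Sum>i<n. u k i * v i) * (\<Sum>j<n. u k j * w j))"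
    by (intro sum.cong refl) (rule sum_product_scaled)
  finally show ?thesis .
qed

lemma spectral_decomposition_eigenvector:
  assumes dec: "spectral_decomposition n M u \<mu>" and j: "j < n" and k: "k < n"
  shows "(\<Sum>i<n. M j i * u k i) = \<mu> k * u k j"
proof -
  have "M j i = (\<Sum>l<n. \<mu> l * u l j * u l i)" if "i < n" for i
    using dec j that unfolding spectral_decomposition_def by blast
  hence "(\<Sum>i<n. M j i * u k i) = (\<Sum>i<n. \<Sum>l<n. \<mu> l * u l j * (u l i * u k i))"
    by (intro sum.cong refl) (auto simp: sum_distrib_right sum_distrib_left algebra_simps)
  also have "\<dots> = (\<Sum>l<n. \<mu> l * u l j * (\<Sum>i<n. u l i * u k i))"
    by (subst sum.swap) (simp add: sum_distrib_left)
  also have "\<dots> = (\<Sum>l<n. \<mu> l * u l j * (if l = k then 1 else 0))"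
    using spectral_decomposition_orthonormal[OF dec] k by (intro sum.cong refl) auto
  also have "\<dots> = \<mu> k * u k j" by (rule sum_kronecker_right[OF k])
  finally show ?thesis .
qed

lemma bform_eigenvector_pair:
  fixes a b :: real
  assumes dec: "spectral_decomposition n M u \<mu>" and k1: "k1 < n" and k2: "k2 < n" and k12: "k1 \<noteq> k2"
  defines "w \<equiv> \<lambda>i. a * u k1 i + b * u k2 i"
  shows "bform n M w w = \<mu> k1 * a\<^sup>2 + \<mu> k2 * b\<^sup>2" and "(\<Sum>i<n. (w i)\<^sup>2) = a\<^sup>2 + b\<^sup>2"
proof -
  note orth = spectral_decomposition_orthonormal[OF dec]
  have coord: "(\<Sum>i<n. u l i * w i) = a * (if l = k1 then 1 else 0) + b * (if l = k2 then 1 else 0)"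
    if "l < n" for l
  proof -
    have "(\<Sum>i<n. u l i * w i) = a * (\<Sum>i<n. u l i * u k1 i) + b * (\<Sum>i<n. u l i * u k2 i)"
      unfolding w_def by (simp add: sum_distrib_left sum.distrib algebra_simps)
    thus ?thesis using orth[OF that k1] orth[OF that k2] by simp
  qed
  have "bform n M w w = (\<Sum>l<n. \<mu> l * (a * (if l = k1 then 1 else 0) + b * (if l = k2 then 1 else 0))\<^sup>2)"
    unfolding bform_spectral[OF dec] by (intro sum.cong refl) (simp add: coord power2_eq_square)
  also have "\<dots> = (\<Sum>l<n. a\<^sup>2 * (\<mu> l * (if l = k1 then 1 else 0)) + b\<^sup>2 * (\<mu> l * (if l = k2 then 1 else 0)))"
    using k12 by (intro sum.cong refl) (auto simp: power2_eq_square)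
  also have "\<dots> = \<mu> k1 * a\<^sup>2 + \<mu> k2 * b\<^sup>2"
    by (simp add: sum.distrib sum_distrib_left[symmetric] sum_kronecker_right[OF k1] sum_kronecker_right[OF k2])
  finally show "bform n M w w = \<mu> k1 * a\<^sup>2 + \<mu> k2 * b\<^sup>2" .
  have "(\<Sum>i<n. (w i)\<^sup>2) = a\<^sup>2 * (\<Sum>i<n. u k1 i * u k1 i)
      + 2 * a * b * (\<Sum>i<n. u k1 i * u k2 i) + b\<^sup>2 * (\<Sum>i<n. u k2 i * u k2 i)"
    unfolding w_def by (simp add: power2_eq_square sum_distrib_left sum.distrib algebra_simps)
  thus "(\<Sum>i<n. (w i)\<^sup>2) = a\<^sup>2 + b\<^sup>2" using orth[OF k1 k1] orth[OF k1 k2] orth[OF k2 k2] k12 by simp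
qed

lemma hyperbolic_if_at_most_one_positive_eigenvalue:
  assumes sym: "sym_matrix n B" and dec: "spectral_decomposition n B u \<mu>"
    and card: "card {k. k < n \<and> \<mu> k > 0} \<le> 1"
  shows "hyperbolic n B"
proof -
  obtain k0 where k0: "\<And>k. k < n \<Longrightarrow> k \<noteq> k0 \<Longrightarrow> \<mu> k \<le> 0"
  proof (cases "\<exists>k0<n. \<mu> k0 > 0")
    case True
    then obtain k0 where k0: "k0 < n" "\<mu> k0 > 0" by blast
    have "\<mu> k \<le> 0" if "k < n" "k \<noteq> k0" for k
    proof (rule ccontr)
      assume "\<not> \<mu> k \<le> 0"
      hence "card {k, k0} \<le> card {k. k < n \<and> \<mu> k > 0}" using that k0 by (intro card_mono) auto
      thus False using card that by auto
    qed
    thus ?thesis by (rule that)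
  next
    case False
    thus ?thesis using that[of 0] by force
  qed
  show ?thesis
  proof (rule hyperbolic_if_nonpos_on_hyperplane[OF sym, of "u k0"])
    fix v assume v: "(\<Sum>i<n. u k0 i * v i) = 0"
    have "bform n B v v = (\<Sum>k<n. \<mu> k * (\<Sum>i<n. u k i * v i)\<^sup>2)"
      unfolding bform_spectral[OF dec] by (simp add: power2_eq_square mult.assoc)
    also have "\<dots> \<le> 0"
    proof (rule sum_nonpos)
      fix k assume "k \<in> {..<n}"
      thus "\<mu> k * (\<Sum>i<n. u k i * v i)\<^sup>2 \<le> 0"
        using k0[of k] v by (cases "k = k0") (auto intro: mult_nonpos_nonneg)
    qed
    finally show "bform n B v v \<le> 0" .
  qed
qed

lemma order_prod_linear_factors:
  fixes n :: nat
  shows "order x (\<Prod>k<n. [:- (\<mu> k :: real), 1:]) = card {k. k < n \<and> \<mu> k = x}"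
proof (induction n)
  case 0 thus ?case by simp
next
  case (Suc n)
  have nz: "(\<Prod>k<Suc n. [:- \<mu> k, 1:]) \<noteq> 0" by (subst prod_zero_iff) auto
  have lin: "order x [:- \<mu> n, 1:] = (if \<mu> n = x then 1 else 0)"
  proof (cases "\<mu> n = x")
    case True thus ?thesis using order_power_n_n[of x 1] by simp
  next
    case False thus ?thesis by (simp add: order_0I)
  qed
  have "order x (\<Prod>k<Suc n. [:- \<mu> k, 1:]) = order x ((\<Prod>k<n. [:- \<mu> k, 1:]) * [:- \<mu> n, 1:])"
    by simp
  also have "\<dots> = order x (\<Prod>k<n. [:- \<mu> k, 1:]) + order x [:- \<mu> n, 1:]"
    using nz by (intro order_mult) simp
  finally have "order x (\<Prod>k<Suc n. [:- \<mu> k, 1:]) = card {k. k < n \<and> \<mu> k = x} + (if \<mu> n = x then 1 else 0)"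
    using Suc.IH lin by simp
  moreover have "{k. k < Suc n \<and> \<mu> k = x} = {k. k < n \<and> \<mu> k = x} \<union> (if \<mu> n = x then {n} else {})"
    by (auto simp: less_Suc_eq)
  ultimately show ?case by (auto simp: card_insert_if)
qed

lemma prod_list_map_upt: "prod_list (map f [0..<n]) = (\<Prod>k<n. f k :: 'a :: comm_monoid_mult)"
  by (induction n) auto

lemma char_poly_spectral_decomposition:
  assumes G: "G \<in> carrier_mat n n" and dec: "spectral_decomposition n (\<lambda>i j. G $$ (i,j)) u \<mu>"
  shows "char_poly G = (\<Prod>k<n. [:- \<mu> k, 1:])"
proof -
  have rows: "\<forall>k<n. \<forall>l<n. (\<Sum>i<n. u k i * u l i) = (if k = l then 1 else 0)"
    and cols: "\<forall>i<n. \<forall>j<n. (\<Sum>k<n. u k i * u k j) = (if i = j then 1 else 0)"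
    and Gij: "\<forall>i<n. \<forall>j<n. G $$ (i,j) = (\<Sum>k<n. \<mu> k * u k i * u k j)"
    using dec unfolding spectral_decomposition_def by blast+
  define U where "U = mat n n (\<lambda>(i,k). u k i)"
  define D where "D = mat n n (\<lambda>(i,j). if i = j then \<mu> i else 0)"
  have U: "U \<in> carrier_mat n n" and D: "D \<in> carrier_mat n n" unfolding U_def D_def by auto
  have "U * U\<^sup>T = 1\<^sub>m n"
    using cols unfolding U_def by (intro eq_matI) (auto simp: scalar_prod_def atLeast0LessThan)
  moreover have "U\<^sup>T * U = 1\<^sub>m n"
    using rows unfolding U_def by (intro eq_matI) (auto simp: scalar_prod_def atLeast0LessThan)
  moreover have "G = U * D * U\<^sup>T"
  proof (rule eq_matI)
    fix i j assume "i < dim_row (U * D * U\<^sup>T)" "j < dim_col (U * D * U\<^sup>T)"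
    hence ij: "i < n" "j < n" using U D by auto
    have UD: "(U * D) $$ (i,k) = u k i * \<mu> k" if "k < n" for k
    proof -
      have "(U * D) $$ (i,k) = (\<Sum>l<n. u l i * (if l = k then \<mu> l else 0))"
        using ij that unfolding U_def D_def by (simp add: scalar_prod_def atLeast0LessThan)
      also have "\<dots> = (\<Sum>l<n. u l i * \<mu> l * (if l = k then 1 else 0))" by (intro sum.cong) auto
      finally show ?thesis using that by simp
    qed
    have "(U * D * U\<^sup>T) $$ (i,j) = (\<Sum>k<n. (U * D) $$ (i,k) * u k j)"
      using ij U D unfolding U_def by (simp add: scalar_prod_def atLeast0LessThan)
    also have "\<dots> = (\<Sum>k<n. \<mu> k * u k i * u k j)" by (intro sum.cong refl) (simp add: UD)
    finally show "G $$ (i,j) = (U * D * U\<^sup>T) $$ (i,j)" using Gij ij by simp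
  qed (use G U D in auto)
  ultimately have "similar_mat_wit G D U U\<^sup>T"
    unfolding similar_mat_wit_def Let_def using G U D by auto
  hence "similar_mat G D" unfolding similar_mat_def by blast
  hence "char_poly G = char_poly D" by (rule char_poly_similar)
  also have "\<dots> = (\<Prod>a\<leftarrow>diag_mat D. [:- a, 1:])"
    by (rule char_poly_upper_triangular[OF D]) (auto simp: upper_triangular_def D_def)
  also have "diag_mat D = map \<mu> [0..<n]" unfolding diag_mat_def D_def by auto
  finally have "char_poly G = (\<Prod>a\<leftarrow>map \<mu> [0..<n]. [:- a, 1:])" .
  thus ?thesis using prod_list_map_upt[of "(\<lambda>a. [:- a, 1:]) \<circ> \<mu>" n] by simp
qed

lemma num_pos_eigenvalues_spectral_decomposition:
  assumes G: "G \<in> carrier_mat n n" and dec: "spectral_decomposition n (\<lambda>i j. G $$ (i,j)) u \<mu>"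
  shows "num_pos_eigenvalues G = card {k. k < n \<and> \<mu> k > 0}"
proof -
  note cp = char_poly_spectral_decomposition[OF G dec]
  let ?K = "{k. k < n \<and> \<mu> k > 0}"
  have "eigenvalue G x \<longleftrightarrow> (\<exists>k<n. \<mu> k = x)" for x
    unfolding eigenvalue_root_char_poly[OF G] cp poly_prod by (auto simp: prod_zero_iff)
  hence "{x. eigenvalue G x \<and> x > 0} = \<mu> ` ?K" by auto
  hence "num_pos_eigenvalues G = (\<Sum>x\<in>\<mu> ` ?K. card {k. k \<in> ?K \<and> \<mu> k = x})"
    unfolding num_pos_eigenvalues_def cp order_prod_linear_factors
    by (intro sum.cong arg_cong[where f = card]) auto
  also have "\<dots> = (\<Sum>x\<in>\<mu> ` ?K. \<Sum>k\<in>{k. k \<in> ?K \<and> \<mu> k = x}. 1)" by simp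
  also have "\<dots> = (\<Sum>k\<in>?K. 1)" by (rule sum.image_gen[symmetric]) simp
  also have "\<dots> = card ?K" by simp
  finally show ?thesis .
qed

lemma weighted_graph_sym_matrix:
  assumes "weighted_graph n G"
  shows "sym_matrix n (\<lambda>i j. G $$ (i,j))"
  unfolding sym_matrix_def
proof (intro allI impI)
  fix i j assume ij: "i < n" "j < n"
  have G: "G \<in> carrier_mat n n" and GT: "G\<^sup>T = G" using assms unfolding weighted_graph_def by auto
  show "G $$ (i,j) = G $$ (j,i)" using arg_cong[OF GT, of "\<lambda>M. M $$ (i,j)"] G ij by auto
qed

lemma antiferromagnetic_hyperbolic:
  assumes "antiferromagnetic n G"
  shows "hyperbolic n (\<lambda>i j. G $$ (i,j))"
proof -
  have G: "G \<in> carrier_mat n n" and sym: "sym_matrix n (\<lambda>i j. G $$ (i,j))"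
    using assms weighted_graph_sym_matrix unfolding antiferromagnetic_def weighted_graph_def by auto
  obtain u \<mu> where dec: "spectral_decomposition n (\<lambda>i j. G $$ (i,j)) u \<mu>"
    using spectral_decomposition_exists[OF sym] by blast
  have "card {k. k < n \<and> \<mu> k > 0} \<le> 1"
    using assms num_pos_eigenvalues_spectral_decomposition[OF G dec]
    unfolding antiferromagnetic_def by simp
  thus ?thesis by (rule hyperbolic_if_at_most_one_positive_eigenvalue[OF sym dec])
qed

lemma abs_form_le_if_positive_eigenvector:
  fixes M :: "'a \<Rightarrow> 'a \<Rightarrow> real"
  assumes sym: "\<And>i j. i \<in> S \<Longrightarrow> j \<in> S \<Longrightarrow> M i j = M j i"
    and nonneg: "\<And>i j. i \<in> S \<Longrightarrow> j \<in> S \<Longrightarrow> M i j \<ge> 0"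
    and z: "\<And>i. i \<in> S \<Longrightarrow> z i > 0"
    and eig: "\<And>i. i \<in> S \<Longrightarrow> (\<Sum>j\<in>S. M i j * z j) = z i"
  shows "(\<Sum>i\<in>S. \<Sum>j\<in>S. M i j * \<bar>w i\<bar> * \<bar>w j\<bar>) \<le> (\<Sum>i\<in>S. (w i)\<^sup>2)"
proof -
  define q where "q i j = M i j * (w i)\<^sup>2 * z j / z i" for i j
  have amgm: "M i j * \<bar>w i\<bar> * \<bar>w j\<bar> \<le> (q i j + q j i) / 2" if ij: "i \<in> S" "j \<in> S" for i j
  proof -
    have "0 \<le> (\<bar>w i\<bar> * z j - \<bar>w j\<bar> * z i)\<^sup>2" by simp
    hence "2 * (\<bar>w i\<bar> * \<bar>w j\<bar>) * (z i * z j) \<le> (w i)\<^sup>2 * (z j)\<^sup>2 + (w j)\<^sup>2 * (z i)\<^sup>2"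
      by (simp add: power2_eq_square algebra_simps)
    hence "\<bar>w i\<bar> * \<bar>w j\<bar> \<le> ((w i)\<^sup>2 * z j / z i + (w j)\<^sup>2 * z i / z j) / 2"
      using z[OF ij(1)] z[OF ij(2)] by (simp add: field_simps power2_eq_square)
    hence "M i j * (\<bar>w i\<bar> * \<bar>w j\<bar>) \<le> M i j * (((w i)\<^sup>2 * z j / z i + (w j)\<^sup>2 * z i / z j) / 2)"
      using nonneg[OF ij] by (rule mult_left_mono)
    thus ?thesis unfolding q_def using sym[OF ij] by (simp add: field_simps)
  qed
  have "q i j = (w i)\<^sup>2 / z i * (M i j * z j)" for i j unfolding q_def by (simp add: mult_ac)
  hence "(\<Sum>i\<in>S. \<Sum>j\<in>S. q i j) = (\<Sum>i\<in>S. (w i)\<^sup>2 / z i * (\<Sum>j\<in>S. M i j * z j))"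
    by (simp add: sum_distrib_left)
  also have "\<dots> = (\<Sum>i\<in>S. (w i)\<^sup>2)"
  proof (intro sum.cong refl)
    fix i assume "i \<in> S"
    thus "(w i)\<^sup>2 / z i * (\<Sum>j\<in>S. M i j * z j) = (w i)\<^sup>2" using z[of i] eig[of i] by simp
  qed
  finally have q: "(\<Sum>i\<in>S. \<Sum>j\<in>S. q i j) = (\<Sum>i\<in>S. (w i)\<^sup>2)" .
  have "(\<Sum>i\<in>S. \<Sum>j\<in>S. M i j * \<bar>w i\<bar> * \<bar>w j\<bar>) \<le> (\<Sum>i\<in>S. \<Sum>j\<in>S. (q i j + q j i) / 2)"
    using amgm by (intro sum_mono) auto
  also have "\<dots> = ((\<Sum>i\<in>S. \<Sum>j\<in>S. q i j) + (\<Sum>i\<in>S. \<Sum>j\<in>S. q j i)) / 2"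
    by (simp only: sum_divide_distrib[symmetric] sum.distrib)
  also have "(\<Sum>i\<in>S. \<Sum>j\<in>S. q j i) = (\<Sum>i\<in>S. \<Sum>j\<in>S. q i j)" by (rule sum.swap)
  finally show ?thesis unfolding q by simp
qed

text \<open>Equality in \<open>w\<^sup>T M w \<le> |w|\<^sup>T M |w|\<close> for a positive \<open>M\<close> forces \<open>w\<close> to have constant sign,
  which is incompatible with orthogonality to a positive vector unless \<open>w = 0\<close>.\<close>
lemma vanishes_if_abs_form_le_form:
  fixes M :: "'a \<Rightarrow> 'a \<Rightarrow> real"
  assumes fin: "finite S" and pos: "\<And>i j. i \<in> S \<Longrightarrow> j \<in> S \<Longrightarrow> M i j > 0"
    and z: "\<And>i. i \<in> S \<Longrightarrow> z i > 0" and orth: "(\<Sum>i\<in>S. z i * w i) = 0"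
    and le: "(\<Sum>i\<in>S. \<Sum>j\<in>S. M i j * \<bar>w i\<bar> * \<bar>w j\<bar>) \<le> (\<Sum>i\<in>S. \<Sum>j\<in>S. M i j * w i * w j)"
    and i: "i \<in> S"
  shows "w i = 0"
proof -
  define f where "f i j = M i j * \<bar>w i\<bar> * \<bar>w j\<bar> - M i j * w i * w j" for i j
  have f0: "f i j \<ge> 0" if "i \<in> S" "j \<in> S" for i j
  proof -
    have "M i j * (w i * w j) \<le> M i j * (\<bar>w i\<bar> * \<bar>w j\<bar>)"
      using pos[OF that] by (intro mult_left_mono) (auto simp: abs_mult[symmetric])
    thus ?thesis unfolding f_def by (simp add: mult.assoc)
  qed
  have "(\<Sum>i\<in>S. \<Sum>j\<in>S. f i j) \<le> 0"
    using le unfolding f_def by (simp add: sum_subtractf)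
  moreover have "(\<Sum>i\<in>S. \<Sum>j\<in>S. f i j) \<ge> 0" using f0 by (intro sum_nonneg) auto
  ultimately have "(\<Sum>i\<in>S. \<Sum>j\<in>S. f i j) = 0" by simp
  hence "\<forall>i\<in>S. (\<Sum>j\<in>S. f i j) = 0" using fin f0 by (subst (asm) sum_nonneg_eq_0_iff) (auto intro: sum_nonneg)
  hence "\<forall>i\<in>S. \<forall>j\<in>S. f i j = 0" using fin f0 by (auto simp: sum_nonneg_eq_0_iff)
  hence same_sign: "w i * w j \<ge> 0" if "j \<in> S" for j
  proof -
    have "M i j * (\<bar>w i\<bar> * \<bar>w j\<bar> - w i * w j) = 0"
      using \<open>\<forall>i\<in>S. \<forall>j\<in>S. f i j = 0\<close> i that unfolding f_def by (simp add: algebra_simps)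
    hence "w i * w j = \<bar>w i\<bar> * \<bar>w j\<bar>" using pos[OF i that] by simp
    thus ?thesis by simp
  qed
  have "0 \<le> z j * (w i * w j)" if "j \<in> S" for j using z[OF that] same_sign[OF that] by simp
  hence "z i * (w i * w i) \<le> (\<Sum>j\<in>S. z j * (w i * w j))"
    using fin i by (intro member_le_sum[of i S "\<lambda>j. z j * (w i * w j)"]) auto
  also have "\<dots> = w i * (\<Sum>j\<in>S. z j * w j)" by (simp add: sum_distrib_left mult_ac)
  finally have "z i * (w i * w i) \<le> 0" using orth by simp
  thus ?thesis using z[OF i] by (auto simp: mult_le_0_iff)
qed

lemma eigenvalue_ge_1_if_gap:
  assumes dec: "spectral_decomposition n M u \<mu>"
    and gap: "\<And>v. bform n M v v \<le> (\<Sum>i<n. (\<Sum>j<n. M i j * v j)\<^sup>2)"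
    and k: "k < n" and pos: "\<mu> k > 0"
  shows "\<mu> k \<ge> 1"
proof -
  have "\<mu> k = (\<Sum>l<n. \<mu> l * (if l = k then 1 else 0))" by (rule sum_kronecker_right[OF k, symmetric])
  also have "\<dots> = bform n M (u k) (u k)"
    unfolding bform_spectral[OF dec] using spectral_decomposition_orthonormal[OF dec _ k]
    by (intro sum.cong refl) simp
  also have "\<dots> \<le> (\<Sum>j<n. (\<mu> k * u k j)\<^sup>2)"
    using gap[of "u k"] spectral_decomposition_eigenvector[OF dec _ k] by simp
  also have "\<dots> = \<mu> k * \<mu> k * (\<Sum>j<n. u k j * u k j)"
    by (simp add: power2_eq_square sum_distrib_left algebra_simps)
  also have "\<dots> = \<mu> k * \<mu> k" using spectral_decomposition_orthonormal[OF dec k k] by simp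
  finally have "\<mu> k * 1 \<le> \<mu> k * \<mu> k" by simp
  thus ?thesis using pos by (simp add: mult_le_cancel_left)
qed

lemma eigenvector_vanishes_outside_support:
  assumes dec: "spectral_decomposition n M u \<mu>"
    and zero: "\<And>i j. i < n \<Longrightarrow> j < n \<Longrightarrow> i \<notin> S \<or> j \<notin> S \<Longrightarrow> M i j = 0"
    and k: "k < n" "\<mu> k \<noteq> 0" and j: "j < n" "j \<notin> S"
  shows "u k j = 0"
proof -
  have "\<mu> k * u k j = (\<Sum>i<n. M j i * u k i)" using spectral_decomposition_eigenvector[OF dec j(1) k(1)] ..
  also have "\<dots> = 0" using zero j by simp
  finally show ?thesis using k by simp
qed

lemma perron_vector_orthogonal_vanishes:
  fixes M :: "'a \<Rightarrow> 'a \<Rightarrow> real"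
  assumes fin: "finite S" and sym: "\<And>i j. i \<in> S \<Longrightarrow> j \<in> S \<Longrightarrow> M i j = M j i"
    and pos: "\<And>i j. i \<in> S \<Longrightarrow> j \<in> S \<Longrightarrow> M i j > 0"
    and z: "\<And>i. i \<in> S \<Longrightarrow> z i > 0" and eig: "\<And>i. i \<in> S \<Longrightarrow> (\<Sum>j\<in>S. M i j * z j) = z i"
    and orth: "(\<Sum>i\<in>S. z i * w i) = 0"
    and le: "(\<Sum>i\<in>S. (w i)\<^sup>2) \<le> (\<Sum>i\<in>S. \<Sum>j\<in>S. M i j * w i * w j)"
  shows "(\<Sum>i\<in>S. (w i)\<^sup>2) = 0"
proof -
  have "(\<Sum>i\<in>S. \<Sum>j\<in>S. M i j * \<bar>w i\<bar> * \<bar>w j\<bar>) \<le> (\<Sum>i\<in>S. (w i)\<^sup>2)"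
    by (rule abs_form_le_if_positive_eigenvector[where z = z]) (use sym pos z eig in \<open>auto intro: less_imp_le\<close>)
  hence absle: "(\<Sum>i\<in>S. \<Sum>j\<in>S. M i j * \<bar>w i\<bar> * \<bar>w j\<bar>) \<le> (\<Sum>i\<in>S. \<Sum>j\<in>S. M i j * w i * w j)"
    using le by linarith
  have "w i = 0" if "i \<in> S" for i
    using fin pos z orth absle that by (rule vanishes_if_abs_form_le_form)
  thus ?thesis by simp
qed

lemma exists_orthogonal_combination:
  fixes p q :: real
  obtains a b where "a\<^sup>2 + b\<^sup>2 > 0" "a * p + b * q = 0"
proof (cases "p = 0 \<and> q = 0")
  case True thus ?thesis using that[of 1 0] by simp
next
  case False thus ?thesis using that[of q "- p"] by (auto simp: sum_power2_gt_zero_iff algebra_simps)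
qed

lemma bform_eq_sum_support:
  assumes S: "S \<subseteq> {..<n}" and w: "\<And>i. i < n \<Longrightarrow> i \<notin> S \<Longrightarrow> w i = 0"
  shows "bform n M w w = (\<Sum>i\<in>S. \<Sum>j\<in>S. M i j * w i * w j)"
proof -
  have "(\<Sum>j<n. w i * M i j * w j) = (\<Sum>j\<in>S. w i * M i j * w j)" for i
    by (rule sum.mono_neutral_right) (use S w in auto)
  moreover have "(\<Sum>i<n. \<Sum>j\<in>S. w i * M i j * w j) = (\<Sum>i\<in>S. \<Sum>j\<in>S. w i * M i j * w j)"
    by (rule sum.mono_neutral_right) (use S w in auto)
  ultimately show ?thesis unfolding bform_def by (simp add: mult_ac)
qed

text \<open>If \<open>M\<close> is positive on its support \<open>S \<times> S\<close> and has a positive eigenvector with eigenvalue 1,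
  then \<open>1\<close> is a simple top eigenvalue; the gap condition excludes eigenvalues in \<open>(0, 1)\<close>.\<close>
lemma hyperbolic_if_spectral_gap:
  fixes M :: "nat \<Rightarrow> nat \<Rightarrow> real"
  assumes sym: "sym_matrix n M" and S: "S \<subseteq> {..<n}"
    and pos: "\<And>i j. i \<in> S \<Longrightarrow> j \<in> S \<Longrightarrow> M i j > 0"
    and zero: "\<And>i j. i < n \<Longrightarrow> j < n \<Longrightarrow> i \<notin> S \<or> j \<notin> S \<Longrightarrow> M i j = 0"
    and z: "\<And>i. i \<in> S \<Longrightarrow> z i > 0" and eig: "\<And>i. i \<in> S \<Longrightarrow> (\<Sum>j\<in>S. M i j * z j) = z i"
    and gap: "\<And>v. bform n M v v \<le> (\<Sum>i<n. (\<Sum>j<n. M i j * v j)\<^sup>2)"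
  shows "hyperbolic n M"
proof (rule ccontr)
  assume not_hyp: "\<not> hyperbolic n M"
  obtain u \<mu> where dec: "spectral_decomposition n M u \<mu>"
    using spectral_decomposition_exists[OF sym] by blast
  have "\<not> card {k. k < n \<and> \<mu> k > 0} \<le> 1"
    using not_hyp hyperbolic_if_at_most_one_positive_eigenvalue[OF sym dec] by blast
  then obtain k1 k2 where k1: "k1 < n" "\<mu> k1 > 0" and k2: "k2 < n" "\<mu> k2 > 0" and k12: "k1 \<noteq> k2"
    using card_le_Suc0_iff_eq[of "{k. k < n \<and> \<mu> k > 0}"] by auto
  \<comment> \<open>A combination of two eigenvectors with eigenvalues \<open>\<ge> 1\<close> that is orthogonal to \<open>z\<close>.\<close>
  obtain a b where ab: "a\<^sup>2 + b\<^sup>2 > 0" "a * (\<Sum>i\<in>S. z i * u k1 i) + b * (\<Sum>i\<in>S. z i * u k2 i) = 0"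
    by (rule exists_orthogonal_combination)
  define w where "w i = a * u k1 i + b * u k2 i" for i
  have w_out: "w i = 0" if "i < n" "i \<notin> S" for i
    unfolding w_def using eigenvector_vanishes_outside_support[OF dec zero] k1 k2 that by simp
  have "(\<Sum>i\<in>S. (w i)\<^sup>2) = (\<Sum>i<n. (w i)\<^sup>2)"
    by (rule sum.mono_neutral_left) (use S w_out in auto)
  also have "\<dots> = a\<^sup>2 + b\<^sup>2"
    using bform_eigenvector_pair(2)[OF dec k1(1) k2(1) k12, of a b] unfolding w_def by simp
  finally have norm: "(\<Sum>i\<in>S. (w i)\<^sup>2) = a\<^sup>2 + b\<^sup>2" .
  have "a\<^sup>2 \<le> \<mu> k1 * a\<^sup>2" "b\<^sup>2 \<le> \<mu> k2 * b\<^sup>2"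
    using mult_right_mono[OF eigenvalue_ge_1_if_gap[OF dec gap k1] zero_le_power2, of a]
      mult_right_mono[OF eigenvalue_ge_1_if_gap[OF dec gap k2] zero_le_power2, of b] by simp_all
  hence "(\<Sum>i\<in>S. (w i)\<^sup>2) \<le> \<mu> k1 * a\<^sup>2 + \<mu> k2 * b\<^sup>2" unfolding norm by simp
  also have "\<dots> = bform n M w w"
    using bform_eigenvector_pair(1)[OF dec k1(1) k2(1) k12, of a b] unfolding w_def by simp
  also have "\<dots> = (\<Sum>i\<in>S. \<Sum>j\<in>S. M i j * w i * w j)" by (rule bform_eq_sum_support[OF S w_out])
  finally have le: "(\<Sum>i\<in>S. (w i)\<^sup>2) \<le> (\<Sum>i\<in>S. \<Sum>j\<in>S. M i j * w i * w j)" .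
  have "(\<Sum>i\<in>S. z i * w i) = 0"
    using ab(2) unfolding w_def by (simp add: sum.distrib sum_distrib_left algebra_simps)
  from perron_vector_orthogonal_vanishes[OF _ _ pos z eig this le] S sym
  have "(\<Sum>i\<in>S. (w i)\<^sup>2) = 0" unfolding sym_matrix_def by (auto intro: finite_subset)
  thus False using norm ab(1) by simp
qed

lemma gap_rescale:
  assumes S: "S \<subseteq> {..<n}" and zero: "\<And>i j. i < n \<Longrightarrow> j < n \<Longrightarrow> i \<notin> S \<or> j \<notin> S \<Longrightarrow> H i j = 0"
    and s: "\<And>i. i \<in> S \<Longrightarrow> s i > 0"
    and gap: "\<And>v. bform n H v v \<le> (\<Sum>i\<in>S. (\<Sum>j<n. H i j * v j)\<^sup>2 / (s i * s i))"
  defines "M \<equiv> \<lambda>i j. if i \<in> S \<and> j \<in> S then H i j / (s i * s j) else 0"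
  shows "bform n M u u \<le> (\<Sum>i<n. (\<Sum>j<n. M i j * u j)\<^sup>2)"
proof -
  have s0: "s i \<noteq> 0" if "i \<in> S" for i using s[OF that] by simp
  define v where "v j = (if j \<in> S then u j / s j else 0)" for j
  have Mu: "(\<Sum>j<n. H i j * v j) = s i * (\<Sum>j<n. M i j * u j)" if i: "i \<in> S" for i
    unfolding sum_distrib_left using i zero by (intro sum.cong refl) (auto simp: v_def M_def s0)
  have "bform n M u u = bform n H v v"
    unfolding bform_def using zero by (intro sum.cong refl) (auto simp: v_def M_def s0)
  also have "\<dots> \<le> (\<Sum>i\<in>S. (\<Sum>j<n. H i j * v j)\<^sup>2 / (s i * s i))" by (rule gap)
  also have "\<dots> = (\<Sum>i\<in>S. (\<Sum>j<n. M i j * u j)\<^sup>2)"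
    using Mu s0 by (intro sum.cong refl) (simp add: power2_eq_square)
  also have "\<dots> \<le> (\<Sum>i<n. (\<Sum>j<n. M i j * u j)\<^sup>2)" by (rule sum_mono2) (use S in auto)
  finally show ?thesis .
qed

text \<open>The same statement for a symmetric \<open>H\<close> whose Perron vector \<open>y\<close> has \<open>H y = D y\<close>, with the gap
  measured in the norm weighted by \<open>D\<^sup>-\<^sup>1\<close>: rescale by \<open>D\<^sup>1\<^sup>/\<^sup>2\<close>.\<close>
lemma hyperbolic_if_weighted_gap:
  assumes sym: "sym_matrix n H" and S: "S \<subseteq> {..<n}"
    and pos: "\<And>i j. i \<in> S \<Longrightarrow> j \<in> S \<Longrightarrow> H i j > 0"
    and zero: "\<And>i j. i < n \<Longrightarrow> j < n \<Longrightarrow> i \<notin> S \<or> j \<notin> S \<Longrightarrow> H i j = 0"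
    and y: "\<And>i. i \<in> S \<Longrightarrow> y i > 0"
    and gap: "\<And>v. bform n H v v \<le> (\<Sum>i\<in>S. (\<Sum>j<n. H i j * v j)\<^sup>2 / ((\<Sum>j<n. H i j * y j) / y i))"
  shows "hyperbolic n H"
proof -
  have finS: "finite S" using S finite_subset by blast
  have restrict: "(\<Sum>j<n. H i j * v j) = (\<Sum>j\<in>S. H i j * v j)" if "i \<in> S" for i v
    by (rule sum.mono_neutral_right) (use S zero that in auto)
  define s where "s i = sqrt ((\<Sum>j<n. H i j * y j) / y i)" for i
  have s: "s i > 0" "s i * s i = (\<Sum>j<n. H i j * y j) / y i" if i: "i \<in> S" for i
  proof -
    have "(\<Sum>j\<in>S. H i j * y j) > 0"
      using finS i pos y by (intro sum_pos2[of S i]) (auto intro: less_imp_le)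
    hence "(\<Sum>j<n. H i j * y j) / y i > 0" using restrict[OF i] y[OF i] by simp
    thus "s i > 0" unfolding s_def by simp
    show "s i * s i = (\<Sum>j<n. H i j * y j) / y i"
      unfolding s_def using \<open>(\<Sum>j<n. H i j * y j) / y i > 0\<close> by (simp only: real_sqrt_mult_self abs_of_pos)
  qed
  have s0: "s i \<noteq> 0" if "i \<in> S" for i using s(1)[OF that] by simp
  define M where "M i j = (if i \<in> S \<and> j \<in> S then H i j / (s i * s j) else 0)" for i j
  have "hyperbolic n M"
  proof (rule hyperbolic_if_spectral_gap[OF _ S])
    show "sym_matrix n M" using sym unfolding sym_matrix_def M_def by (auto simp: mult.commute)
    show "M i j > 0" if "i \<in> S" "j \<in> S" for i j
      using pos[OF that] s(1)[OF that(1)] s(1)[OF that(2)] that unfolding M_def by simp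
    show "M i j = 0" if "i \<notin> S \<or> j \<notin> S" for i j using that unfolding M_def by auto
    show "s i * y i > 0" if "i \<in> S" for i using s(1)[OF that] y[OF that] by simp
    show "(\<Sum>j\<in>S. M i j * (s j * y j)) = s i * y i" if i: "i \<in> S" for i
    proof -
      have "(\<Sum>j\<in>S. M i j * (s j * y j)) = (\<Sum>j\<in>S. H i j * y j) / s i"
        unfolding sum_divide_distrib M_def using i by (intro sum.cong refl) (simp add: s0)
      also have "\<dots> = s i * y i" using restrict[OF i] s[OF i] y[OF i] by (simp add: field_simps)
      finally show ?thesis .
    qed
    show "bform n M u u \<le> (\<Sum>i<n. (\<Sum>j<n. M i j * u j)\<^sup>2)" for u
      unfolding M_def
    proof (rule gap_rescale[OF S zero s(1)])
      show "bform n H v v \<le> (\<Sum>i\<in>S. (\<Sum>j<n. H i j * v j)\<^sup>2 / (s i * s i))" for v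
        using gap[of v] s(2) by (simp cong: sum.cong)
    qed
  qed
  hence "hyperbolic n (\<lambda>j k. s j * M j k * s k)" by (rule hyperbolic_diag_congruence)
  thus ?thesis by (rule hyperbolic_cong) (use zero in \<open>auto simp: M_def s0\<close>)
qed

section \<open>Volumes of complete graphs\<close>

definition edges_K :: "nat \<Rightarrow> (nat \<times> nat) set" where "edges_K t = {(u,v). u < v \<and> v < t}"

definition vol :: "nat \<Rightarrow> nat \<Rightarrow> (nat \<Rightarrow> nat \<Rightarrow> real) \<Rightarrow> (nat \<Rightarrow> nat \<Rightarrow> real) \<Rightarrow> real" where
  "vol t n g x = (\<Sum>\<phi>\<in>{0..<t} \<rightarrow>\<^sub>E {0..<n}. (\<Prod>(u,v)\<in>edges_K t. g (\<phi> u) (\<phi> v)) * (\<Prod>u<t. x u (\<phi> u)))"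

lemma finite_edges_K[simp]: "finite (edges_K t)"
proof -
  have "edges_K t \<subseteq> {..<t} \<times> {..<t}" unfolding edges_K_def by auto
  thus ?thesis by (rule finite_subset) auto
qed

lemma volume_Kt_eq_vol: "volume_Kt t n G x = vol t n (\<lambda>i j. G $$ (i,j)) x"
  unfolding volume_Kt_def vol_def edges_K_def ..

lemma PiE_less:
  fixes t n u :: nat
  shows "\<phi> \<in> {0..<t} \<rightarrow>\<^sub>E {0..<n} \<Longrightarrow> u < t \<Longrightarrow> \<phi> u < n"
  using PiE_mem[of \<phi> "{0..<t}" "\<lambda>_. {0..<n}" u] by auto

lemma PiE_edges_K_less:
  fixes t n :: nat
  shows "\<phi> \<in> {0..<t} \<rightarrow>\<^sub>E {0..<n} \<Longrightarrow> (a,b) \<in> edges_K t \<Longrightarrow> \<phi> a < n \<and> \<phi> b < n"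
  unfolding edges_K_def using PiE_less[of \<phi> t n a] PiE_less[of \<phi> t n b] by auto

lemma sum_PiE_insert:
  assumes "x \<notin> S"
  shows "(\<Sum>\<phi>\<in>Pi\<^sub>E (insert x S) T. F \<phi>) = (\<Sum>(i,\<psi>)\<in>T x \<times> Pi\<^sub>E S T. F (\<psi>(x := i)))"
  unfolding PiE_insert_eq by (subst sum.reindex[OF inj_combinator[OF assms]]) (simp add: comp_def case_prod_beta)

lemma vol_cong:
  assumes "\<And>u j. u < t \<Longrightarrow> j < n \<Longrightarrow> x u j = x' u j"
  shows "vol t n g x = vol t n g x'"
  unfolding vol_def using assms by (intro sum.cong refl arg_cong2[where f="(*)"] prod.cong) (auto dest: PiE_less)

definition nonneg_matrix :: "nat \<Rightarrow> (nat \<Rightarrow> nat \<Rightarrow> real) \<Rightarrow> bool" where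
  "nonneg_matrix n g \<longleftrightarrow> (\<forall>i<n. \<forall>j<n. g i j \<ge> 0)"
definition nonneg_vectors :: "nat \<Rightarrow> nat \<Rightarrow> (nat \<Rightarrow> nat \<Rightarrow> real) \<Rightarrow> bool" where
  "nonneg_vectors t n x \<longleftrightarrow> (\<forall>u<t. \<forall>j<n. x u j \<ge> 0)"

lemma edge_weights_nonneg:
  "nonneg_matrix n g \<Longrightarrow> \<phi> \<in> {0..<t} \<rightarrow>\<^sub>E {0..<n} \<Longrightarrow> (\<Prod>(u,v)\<in>edges_K t. g (\<phi> u) (\<phi> v)) \<ge> 0"
  unfolding nonneg_matrix_def by (intro prod_nonneg) (auto dest: PiE_edges_K_less)

lemma vol_nonneg: "nonneg_matrix n g \<Longrightarrow> nonneg_vectors t n x \<Longrightarrow> vol t n g x \<ge> 0"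
  unfolding vol_def
  by (intro sum_nonneg mult_nonneg_nonneg edge_weights_nonneg prod_nonneg) (auto simp: nonneg_vectors_def dest: PiE_less)

lemma vol_mono:
  assumes "nonneg_matrix n g" "nonneg_vectors t n x" "\<And>u j. u < t \<Longrightarrow> j < n \<Longrightarrow> x u j \<le> x' u j"
  shows "vol t n g x \<le> vol t n g x'"
  unfolding vol_def
proof (intro sum_mono mult_left_mono edge_weights_nonneg[OF assms(1)] prod_mono conjI)
  fix \<phi> u assume "\<phi> \<in> {0..<t} \<rightarrow>\<^sub>E {0..<n}" "u \<in> {..<t}"
  thus "0 \<le> x u (\<phi> u)" "x u (\<phi> u) \<le> x' u (\<phi> u)" using assms(2,3) unfolding nonneg_vectors_def by (auto dest: PiE_less)
qed

lemma vol_scale: "vol t n g (\<lambda>u j. c u * x u j) = (\<Prod>u<t. c u) * vol t n g x"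
  unfolding vol_def by (simp add: prod.distrib sum_distrib_left algebra_simps)

lemma prod_fun_upd:
  fixes t :: nat
  shows "u < t \<Longrightarrow> (\<Prod>w<t. (x(u := f)) w (\<phi> w)) = f (\<phi> u) * (\<Prod>w\<in>{..<t} - {u}. x w (\<phi> w))"
  by (subst prod.remove[of _ u]) (auto intro!: prod.cong)

lemma vol_fun_upd_expand:
  assumes "u < t"
  shows "vol t n g (x(u := f)) = (\<Sum>\<phi>\<in>{0..<t} \<rightarrow>\<^sub>E {0..<n}.
           (\<Prod>(u,v)\<in>edges_K t. g (\<phi> u) (\<phi> v)) * f (\<phi> u) * (\<Prod>w\<in>{..<t} - {u}. x w (\<phi> w)))"
  unfolding vol_def prod_fun_upd[OF assms] by (simp add: mult.assoc)

lemma vol_slot_sum: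
  assumes "u < t" "finite I"
  shows "vol t n g (x(u := (\<lambda>j. \<Sum>i\<in>I. c i * f i j))) = (\<Sum>i\<in>I. c i * vol t n g (x(u := f i)))"
  unfolding vol_fun_upd_expand[OF assms(1)]
  by (simp add: sum_distrib_left sum_distrib_right algebra_simps) (rule sum.swap)

lemma vol_slot_linear:
  assumes "u < t"
  shows "vol t n g (x(u := (\<lambda>j. a * p j + b * q j))) = a * vol t n g (x(u := p)) + b * vol t n g (x(u := q))"
  unfolding vol_fun_upd_expand[OF assms(1)]
  by (simp add: sum_distrib_left sum_distrib_right algebra_simps sum.distrib)

lemma vol_slot_zero:
  assumes "u < t"
  shows "vol t n g (x(u := (\<lambda>j. 0))) = 0"
  unfolding vol_fun_upd_expand[OF assms(1)] by simp

lemma vol_slot_add_diff: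
  assumes "u < t"
  shows "vol t n g x + vol t n g (x(u := (\<lambda>j. b j - x u j))) = vol t n g (x(u := b))"
  using vol_slot_linear[OF assms, of n g x 1 b "- 1" "x u"] by simp

definition ebasis :: "nat \<Rightarrow> nat \<Rightarrow> real" where "ebasis i j = (if j = i then 1 else 0)"

lemma vol_slot_expand:
  assumes "u < t"
  shows "vol t n g (x(u := y)) = (\<Sum>i<n. y i * vol t n g (x(u := ebasis i)))"
proof -
  have "vol t n g (x(u := y)) = vol t n g (x(u := (\<lambda>j. \<Sum>i<n. y i * ebasis i j)))"
    by (intro vol_cong) (auto simp: ebasis_def if_distrib[of "\<lambda>z. _ * z"] sum.delta cong: if_cong)
  also have "\<dots> = (\<Sum>i<n. y i * vol t n g (x(u := ebasis i)))" by (rule vol_slot_sum[OF assms]) simp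
  finally show ?thesis .
qed

lemma edges_K_Suc: "edges_K (Suc t) = edges_K t \<union> (\<lambda>u. (u, t)) ` {..<t}"
  unfolding edges_K_def by (auto simp: less_Suc_eq)

lemma vol_Suc:
  "vol (Suc t) n g x = (\<Sum>i<n. x t i * vol t n g (\<lambda>u j. g j i * x u j))"
proof -
  let ?F = "\<lambda>\<phi>. (\<Prod>(u,v)\<in>edges_K (Suc t). g (\<phi> u) (\<phi> v)) * (\<Prod>u<Suc t. x u (\<phi> u))"
  have ins: "{0..<Suc t} = insert t {0..<t}" by auto
  have "vol (Suc t) n g x = (\<Sum>(i,\<psi>)\<in>{0..<n} \<times> ({0..<t} \<rightarrow>\<^sub>E {0..<n}). ?F (\<psi>(t := i)))"
    unfolding vol_def ins by (rule sum_PiE_insert) simp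
  also have "\<dots> = (\<Sum>i<n. \<Sum>\<psi>\<in>{0..<t} \<rightarrow>\<^sub>E {0..<n}. ?F (\<psi>(t := i)))"
    by (subst sum.cartesian_product[symmetric]) (simp add: atLeast0LessThan)
  also have "\<dots> = (\<Sum>i<n. x t i * vol t n g (\<lambda>u j. g j i * x u j))"
  proof (intro sum.cong refl)
    fix i assume i: "i \<in> {..<n}"
    have e: "?F (\<psi>(t := i)) = x t i * ((\<Prod>(u,v)\<in>edges_K t. g (\<psi> u) (\<psi> v)) * (\<Prod>u<t. g (\<psi> u) i * x u (\<psi> u)))"
      for \<psi>
    proof -
      have d: "edges_K t \<inter> (\<lambda>u. (u, t)) ` {..<t} = {}" unfolding edges_K_def by auto
      have "(\<Prod>(u,v)\<in>edges_K (Suc t). g ((\<psi>(t := i)) u) ((\<psi>(t := i)) v))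
          = (\<Prod>(u,v)\<in>edges_K t. g ((\<psi>(t := i)) u) ((\<psi>(t := i)) v))
            * (\<Prod>(u,v)\<in>(\<lambda>u. (u, t)) ` {..<t}. g ((\<psi>(t := i)) u) ((\<psi>(t := i)) v))"
        unfolding edges_K_Suc by (rule prod.union_disjoint) (use d in auto)
      also have "(\<Prod>(u,v)\<in>edges_K t. g ((\<psi>(t := i)) u) ((\<psi>(t := i)) v)) = (\<Prod>(u,v)\<in>edges_K t. g (\<psi> u) (\<psi> v))"
        by (intro prod.cong) (auto simp: edges_K_def)
      also have "(\<Prod>(u,v)\<in>(\<lambda>u. (u, t)) ` {..<t}. g ((\<psi>(t := i)) u) ((\<psi>(t := i)) v)) = (\<Prod>u<t. g (\<psi> u) i)"
        by (subst prod.reindex) (auto simp: inj_on_def intro!: prod.cong)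
      finally have W: "(\<Prod>(u,v)\<in>edges_K (Suc t). g ((\<psi>(t := i)) u) ((\<psi>(t := i)) v))
          = (\<Prod>(u,v)\<in>edges_K t. g (\<psi> u) (\<psi> v)) * (\<Prod>u<t. g (\<psi> u) i)" .
      have X: "(\<Prod>u<Suc t. x u ((\<psi>(t := i)) u)) = x t i * (\<Prod>u<t. x u (\<psi> u))"
        by (simp add: mult.commute)
      show ?thesis unfolding W X by (simp add: prod.distrib algebra_simps)
    qed
    show "(\<Sum>\<psi>\<in>{0..<t} \<rightarrow>\<^sub>E {0..<n}. ?F (\<psi>(t := i))) = x t i * vol t n g (\<lambda>u j. g j i * x u j)"
      unfolding vol_def sum_distrib_left by (rule sum.cong[OF refl]) (rule e)
  qed
  finally show ?thesis .
qed

lemma edges_K_permute_bij: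
  fixes \<sigma> :: "nat \<Rightarrow> nat"
  assumes bij: "bij_betw \<sigma> {..<t} {..<t}"
  defines "e \<equiv> \<lambda>(u,v). (min (\<sigma> u) (\<sigma> v), max (\<sigma> u) (\<sigma> v))"
  shows "bij_betw e (edges_K t) (edges_K t)"
proof -
  have inj: "inj_on \<sigma> {..<t}" and img: "\<sigma> ` {..<t} = {..<t}" using bij unfolding bij_betw_def by auto
  have lt: "\<sigma> u < t" if "u < t" for u using img that by auto
  have sub: "e ` edges_K t \<subseteq> edges_K t"
  proof
    fix p assume "p \<in> e ` edges_K t"
    then obtain u v where uv: "u < v" "v < t" and p: "p = e (u,v)" unfolding edges_K_def by auto
    have "\<sigma> u \<noteq> \<sigma> v" using inj uv unfolding inj_on_def by (metis lessThan_iff less_trans less_irrefl)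
    thus "p \<in> edges_K t" unfolding p e_def edges_K_def using lt uv by (auto simp: min_def max_def)
  qed
  have injE: "inj_on e (edges_K t)"
  proof (rule inj_onI)
    fix p q assume p: "p \<in> edges_K t" and q: "q \<in> edges_K t" and eq: "e p = e q"
    obtain u v where p': "p = (u,v)" "u < v" "v < t" using p unfolding edges_K_def by auto
    obtain u' v' where q': "q = (u',v')" "u' < v'" "v' < t" using q unfolding edges_K_def by auto
    have "{\<sigma> u, \<sigma> v} = {\<sigma> u', \<sigma> v'}"
      using eq unfolding p'(1) q'(1) e_def by (auto simp: min_def max_def split: if_splits)
    hence "{u, v} = {u', v'}"
    proof -
      assume h: "{\<sigma> u, \<sigma> v} = {\<sigma> u', \<sigma> v'}"
      have "\<sigma> ` {u,v} = \<sigma> ` {u',v'}" using h by simp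
      moreover have "{u,v} \<subseteq> {..<t}" "{u',v'} \<subseteq> {..<t}" using p' q' by auto
      ultimately show ?thesis using inj by (meson inj_on_image_eq_iff)
    qed
    thus "p = q" unfolding p'(1) q'(1) using p'(2) q'(2)
      by (metis doubleton_eq_iff less_asym)
  qed
  have "card (e ` edges_K t) = card (edges_K t)" using injE by (rule card_image)
  hence "e ` edges_K t = edges_K t" using sub by (intro card_subset_eq) auto
  thus ?thesis using injE unfolding bij_betw_def by auto
qed

lemma prod_edges_K_permute:
  assumes sym: "sym_matrix n g" and bij: "bij_betw \<sigma> {..<t} {..<t}" and \<psi>: "\<And>u. u < t \<Longrightarrow> \<psi> u < n"
  shows "(\<Prod>(u,v)\<in>edges_K t. g (\<psi> (\<sigma> u)) (\<psi> (\<sigma> v))) = (\<Prod>(u,v)\<in>edges_K t. g (\<psi> u) (\<psi> v))"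
proof -
  let ?e = "\<lambda>(u,v). (min (\<sigma> u) (\<sigma> v), max (\<sigma> u) (\<sigma> v))"
  have lt: "\<sigma> u < t" if "u < t" for u using bij that unfolding bij_betw_def by auto
  have "(\<Prod>(u,v)\<in>edges_K t. g (\<psi> (\<sigma> u)) (\<psi> (\<sigma> v))) = (\<Prod>p\<in>edges_K t. (\<lambda>(a,b). g (\<psi> a) (\<psi> b)) (?e p))"
  proof (intro prod.cong refl)
    fix p assume "p \<in> edges_K t"
    then obtain u v where p: "p = (u,v)" "u < v" "v < t" unfolding edges_K_def by auto
    hence "\<psi> (\<sigma> u) < n" "\<psi> (\<sigma> v) < n" using \<psi> lt by auto
    thus "(case p of (u, v) \<Rightarrow> g (\<psi> (\<sigma> u)) (\<psi> (\<sigma> v))) = (\<lambda>(a,b). g (\<psi> a) (\<psi> b)) (?e p)"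
      using sym p unfolding sym_matrix_def by (auto simp: min_def max_def)
  qed
  also have "\<dots> = (\<Prod>(a,b)\<in>edges_K t. g (\<psi> a) (\<psi> b))"
    by (rule prod.reindex_bij_betw[OF edges_K_permute_bij[OF bij]])
  finally show ?thesis .
qed

lemma bij_betw_PiE_compose:
  fixes \<sigma> :: "nat \<Rightarrow> nat"
  assumes bij: "bij_betw \<sigma> {..<t} {..<t}"
  shows "bij_betw (\<lambda>\<psi>. restrict (\<lambda>u. \<psi> (\<sigma> u)) {0..<t}) ({0..<t} \<rightarrow>\<^sub>E A) ({0..<t} \<rightarrow>\<^sub>E A)"
proof -
  define \<tau> where "\<tau> = inv_into {..<t} \<sigma>"
  have lt: "\<sigma> u < t" "\<tau> u < t" if "u < t" for u
    using that bij bij_betw_inv_into[OF bij] unfolding \<tau>_def bij_betw_def by auto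
  have st: "\<sigma> (\<tau> u) = u" "\<tau> (\<sigma> u) = u" if "u < t" for u
    using that bij unfolding \<tau>_def bij_betw_def by (auto intro: f_inv_into_f inv_into_f_f)
  show ?thesis
  proof (rule bij_betw_byWitness[where f' = "\<lambda>\<phi>. restrict (\<lambda>u. \<phi> (\<tau> u)) {0..<t}"])
    show "\<forall>\<psi>\<in>{0..<t} \<rightarrow>\<^sub>E A. restrict (\<lambda>u. restrict (\<lambda>u. \<psi> (\<sigma> u)) {0..<t} (\<tau> u)) {0..<t} = \<psi>"
      using lt st by (auto simp: PiE_def extensional_def fun_eq_iff)
    show "\<forall>\<phi>\<in>{0..<t} \<rightarrow>\<^sub>E A. restrict (\<lambda>u. restrict (\<lambda>u. \<phi> (\<tau> u)) {0..<t} (\<sigma> u)) {0..<t} = \<phi>"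
      using lt st by (auto simp: PiE_def extensional_def fun_eq_iff)
  qed (use lt in auto)
qed

lemma vol_permute:
  assumes sym: "sym_matrix n g" and bij: "bij_betw \<sigma> {..<t} {..<t}"
  shows "vol t n g (\<lambda>u. x (\<sigma> u)) = vol t n g x"
proof -
  let ?c = "\<lambda>\<psi>. restrict (\<lambda>u. \<psi> (\<sigma> u)) {0..<t}"
  let ?F = "\<lambda>\<phi>. (\<Prod>(u,v)\<in>edges_K t. g (\<phi> u) (\<phi> v)) * (\<Prod>u<t. x (\<sigma> u) (\<phi> u))"
  have "vol t n g (\<lambda>u. x (\<sigma> u)) = (\<Sum>\<psi>\<in>{0..<t} \<rightarrow>\<^sub>E {0..<n}. ?F (?c \<psi>))"
    unfolding vol_def by (rule sum.reindex_bij_betw[OF bij_betw_PiE_compose[OF bij], symmetric])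
  also have "\<dots> = vol t n g x" unfolding vol_def
  proof (intro sum.cong refl)
    fix \<psi> assume \<psi>: "\<psi> \<in> {0..<t} \<rightarrow>\<^sub>E {0..<n}"
    have lt: "\<sigma> u < t" if "u < t" for u using bij that unfolding bij_betw_def by auto
    have "(\<Prod>(u,v)\<in>edges_K t. g (?c \<psi> u) (?c \<psi> v)) = (\<Prod>(u,v)\<in>edges_K t. g (\<psi> (\<sigma> u)) (\<psi> (\<sigma> v)))"
      by (intro prod.cong refl) (auto simp: edges_K_def)
    also have "\<dots> = (\<Prod>(u,v)\<in>edges_K t. g (\<psi> u) (\<psi> v))"
      using \<psi> by (intro prod_edges_K_permute[OF sym bij]) (auto dest: PiE_less)
    moreover have "(\<Prod>u<t. x (\<sigma> u) (?c \<psi> u)) = (\<Prod>u<t. x u (\<psi> u))"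
      using prod.reindex_bij_betw[OF bij, of "\<lambda>w. x w (\<psi> w)"] by simp
    ultimately show "?F (?c \<psi>) = (\<Prod>(u,v)\<in>edges_K t. g (\<psi> u) (\<psi> v)) * (\<Prod>u<t. x u (\<psi> u))" by simp
  qed
  finally show ?thesis .
qed

lemma transpose_bij_betw_lessThan: "a < t \<Longrightarrow> b < t \<Longrightarrow> bij_betw (Transposition.transpose a b) {..<t} {..<t}"
  by (rule bij_betw_byWitness[where f' = "Transposition.transpose a b"]) (auto simp: Transposition.transpose_def)

lemma vol_transpose:
  assumes "sym_matrix n g" "a < t" "b < t"
  shows "vol t n g (\<lambda>u. x (Transposition.transpose a b u)) = vol t n g x"
  using vol_permute[OF assms(1) transpose_bij_betw_lessThan[OF assms(2,3)]] .

lemma vol_0: "vol 0 n g x = 1"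
  unfolding vol_def edges_K_def by simp

lemma vol_Suc_ebasis:
  assumes "i < n"
  shows "vol (Suc t) n g (x(t := ebasis i)) = vol t n g (\<lambda>u m. g m i * x u m)"
proof -
  have "vol (Suc t) n g (x(t := ebasis i)) = (\<Sum>l<n. ebasis i l * vol t n g (\<lambda>u m. g m l * (x(t := ebasis i)) u m))"
    by (subst vol_Suc) simp
  also have "\<dots> = (\<Sum>l<n. ebasis i l * vol t n g (\<lambda>u m. g m l * x u m))"
    by (intro sum.cong refl arg_cong2[where f="(*)"] vol_cong) auto
  also have "\<dots> = vol t n g (\<lambda>u m. g m i * x u m)"
    using assms unfolding ebasis_def by (simp add: if_distrib[of "\<lambda>z. z * _"] sum.delta cong: if_cong)
  finally show ?thesis .
qed

lemma vol_pos:
  assumes "nonneg_matrix n g" "nonneg_vectors t n x" "\<phi>0 \<in> {0..<t} \<rightarrow>\<^sub>E {0..<n}"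
    "\<And>u v. (u,v) \<in> edges_K t \<Longrightarrow> g (\<phi>0 u) (\<phi>0 v) > 0" "\<And>u. u < t \<Longrightarrow> x u (\<phi>0 u) > 0"
  shows "vol t n g x > 0"
  unfolding vol_def
proof (rule sum_pos2[OF _ assms(3)])
  show "finite ({0..<t} \<rightarrow>\<^sub>E {0..<n})" by (simp add: finite_PiE)
  show "0 < (\<Prod>(u,v)\<in>edges_K t. g (\<phi>0 u) (\<phi>0 v)) * (\<Prod>u<t. x u (\<phi>0 u))"
    using assms(4,5) by (intro mult_pos_pos prod_pos) auto
  fix \<phi> assume "\<phi> \<in> {0..<t} \<rightarrow>\<^sub>E {0..<n}"
  thus "0 \<le> (\<Prod>(u,v)\<in>edges_K t. g (\<phi> u) (\<phi> v)) * (\<Prod>u<t. x u (\<phi> u))"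
    using assms(1,2) by (intro mult_nonneg_nonneg edge_weights_nonneg prod_nonneg) (auto simp: nonneg_vectors_def dest: PiE_less)
qed

text \<open>The Hessian of \<open>y \<mapsto> vol T n g (\<lambda>_. y)\<close> at \<open>y\<close>, divided by \<open>T (T - 1)\<close>.\<close>
definition hessian :: "nat \<Rightarrow> nat \<Rightarrow> (nat \<Rightarrow> nat \<Rightarrow> real) \<Rightarrow> (nat \<Rightarrow> real) \<Rightarrow> nat \<Rightarrow> nat \<Rightarrow> real" where
  "hessian T n g y i j = vol T n g ((\<lambda>_. y)(T - 2 := ebasis j, T - 1 := ebasis i))"

lemma bform_vol_two_slots:
  assumes ab: "a < T" "b < T" "a \<noteq> b"
  shows "bform n (\<lambda>i j. vol T n g (x(a := ebasis j, b := ebasis i))) v w = vol T n g (x(a := w, b := v))"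
proof -
  have "bform n (\<lambda>i j. vol T n g (x(a := ebasis j, b := ebasis i))) v w
      = (\<Sum>i<n. v i * (\<Sum>j<n. w j * vol T n g ((x(b := ebasis i))(a := ebasis j))))"
    unfolding bform_def using ab by (simp add: sum_distrib_left fun_upd_twist algebra_simps)
  also have "\<dots> = (\<Sum>i<n. v i * vol T n g ((x(b := ebasis i))(a := w)))"
    using vol_slot_expand[OF ab(1), of n g "x(b := ebasis i)" w for i] by simp
  also have "\<dots> = (\<Sum>i<n. v i * vol T n g ((x(a := w))(b := ebasis i)))"
    using ab by (simp add: fun_upd_twist)
  also have "\<dots> = vol T n g ((x(a := w))(b := v))"
    using vol_slot_expand[OF ab(2), of n g "x(a := w)" v] by simp
  finally show ?thesis by simp
qed

lemma bform_hessian: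
  assumes "T \<ge> 2"
  shows "bform n (hessian T n g y) v w = vol T n g ((\<lambda>_. y)(T - 2 := w, T - 1 := v))"
  unfolding hessian_def by (rule bform_vol_two_slots) (use assms in auto)

lemma hessian_sym:
  assumes "sym_matrix n g" "T \<ge> 2"
  shows "sym_matrix n (hessian T n g y)"
  unfolding sym_matrix_def
proof (intro allI impI)
  fix i j assume "i < n" "j < n"
  let ?x = "(\<lambda>_. y)(T - 2 := ebasis j, T - 1 := ebasis i)"
  have "hessian T n g y i j = vol T n g (\<lambda>u. ?x (Transposition.transpose (T - 2) (T - 1) u))"
    unfolding hessian_def using assms(2) by (subst vol_transpose[OF assms(1)]) auto
  also have "(\<lambda>u. ?x (Transposition.transpose (T - 2) (T - 1) u)) = (\<lambda>_. y)(T - 2 := ebasis i, T - 1 := ebasis j)"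
    using assms(2) by (intro ext) (auto simp: Transposition.transpose_def)
  finally show "hessian T n g y i j = hessian T n g y j i" unfolding hessian_def .
qed

lemma vol_1: "vol (Suc 0) n g z = (\<Sum>l<n. z 0 l)"
  by (subst vol_Suc) (simp add: vol_0)

lemma hessian_2:
  assumes "i < n" "j < n"
  shows "hessian 2 n g y i j = g j i"
proof -
  have "hessian 2 n g y i j = vol (Suc (Suc 0)) n g (((\<lambda>_. y)(0 := ebasis j))(Suc 0 := ebasis i))"
    unfolding hessian_def by (simp add: numeral_2_eq_2)
  also have "\<dots> = vol (Suc 0) n g (\<lambda>u m. g m i * ((\<lambda>_. y)(0 := ebasis j)) u m)"
    by (rule vol_Suc_ebasis[OF assms(1)])
  also have "\<dots> = (\<Sum>l<n. g l i * ebasis j l)" by (simp add: vol_1)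
  also have "\<dots> = g j i" using assms(2) unfolding ebasis_def
    by (simp add: if_distrib[of "\<lambda>z. _ * z"] sum.delta cong: if_cong)
  finally show ?thesis .
qed

section \<open>Hyperbolicity of the Hessian of the volume\<close>

lemma prod_two_points:
  fixes a b t :: nat
  assumes "a < t" "b < t" "a \<noteq> b"
  shows "(\<Prod>u<t. (if u = a then \<alpha> else if u = b then \<beta> else 1)) = (\<alpha> * \<beta> :: real)"
proof -
  have "(\<Prod>u<t. (if u = a then \<alpha> else if u = b then \<beta> else 1))
      = (\<Prod>u<t. (if u = a then \<alpha> else 1) * (if u = b then \<beta> else 1))"
    using assms by (intro prod.cong) auto
  also have "\<dots> = \<alpha> * \<beta>" using assms by (simp add: prod.distrib prod.delta)
  finally show ?thesis .
qed

lemma prod_one_point: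
  fixes a t :: nat
  assumes "a < t"
  shows "(\<Prod>u<t. (if u = a then \<alpha> else 1)) = (\<alpha> :: real)"
  using assms by (simp add: prod.delta)

text \<open>\<open>K\<^sub>i\<close>: the Hessian of \<open>K\<^sub>t\<^sub>+\<^sub>1\<close> at \<open>y\<close> with the last vertex pinned to \<open>i\<close>.\<close>
definition vertex_hessian :: "nat \<Rightarrow> nat \<Rightarrow> (nat \<Rightarrow> nat \<Rightarrow> real) \<Rightarrow> (nat \<Rightarrow> real) \<Rightarrow> nat \<Rightarrow> nat \<Rightarrow> nat \<Rightarrow> real" where
  "vertex_hessian t n g y i j k = vol (Suc t) n g (((\<lambda>_. y)(t := ebasis i))(t - 2 := ebasis k, t - 1 := ebasis j))"

lemma vertex_hessian_eq:
  assumes t: "t \<ge> 2" and i: "i < n" and j: "j < n" and k: "k < n"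
  shows "vertex_hessian t n g y i j k = g j i * g k i * hessian t n g (\<lambda>m. g m i * y m) j k"
proof -
  have "vertex_hessian t n g y i j k = vol (Suc t) n g (((\<lambda>_. y)(t - 2 := ebasis k, t - 1 := ebasis j))(t := ebasis i))"
    unfolding vertex_hessian_def using t by (simp add: fun_upd_twist)
  also have "\<dots> = vol t n g (\<lambda>u m. g m i * ((\<lambda>_. y)(t - 2 := ebasis k, t - 1 := ebasis j)) u m)"
    by (rule vol_Suc_ebasis[OF i])
  also have "\<dots> = vol t n g (\<lambda>u m. (if u = t - 2 then g k i else if u = t - 1 then g j i else 1)
        * ((\<lambda>_. (\<lambda>m. g m i * y m))(t - 2 := ebasis k, t - 1 := ebasis j)) u m)"
    using t by (intro vol_cong) (auto simp: ebasis_def)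
  also have "\<dots> = g k i * g j i * hessian t n g (\<lambda>m. g m i * y m) j k"
    unfolding vol_scale hessian_def using t by (subst prod_two_points) auto
  finally show ?thesis by simp
qed

lemma hessian_Suc:
  assumes t: "t \<ge> 1" and i: "i < n" and j: "j < n"
  shows "hessian (Suc t) n g y i j = g j i * vol t n g ((\<lambda>_. (\<lambda>m. g m i * y m))(t - 1 := ebasis j))"
proof -
  have "hessian (Suc t) n g y i j = vol (Suc t) n g (((\<lambda>_. y)(t - 1 := ebasis j))(t := ebasis i))"
    unfolding hessian_def using t by simp
  also have "\<dots> = vol t n g (\<lambda>u m. g m i * ((\<lambda>_. y)(t - 1 := ebasis j)) u m)"
    by (rule vol_Suc_ebasis[OF i])
  also have "\<dots> = vol t n g (\<lambda>u m. (if u = t - 1 then g j i else 1)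
        * ((\<lambda>_. (\<lambda>m. g m i * y m))(t - 1 := ebasis j)) u m)"
    using t by (intro vol_cong) (auto simp: ebasis_def)
  also have "\<dots> = g j i * vol t n g ((\<lambda>_. (\<lambda>m. g m i * y m))(t - 1 := ebasis j))"
    unfolding vol_scale using t by (subst prod_one_point) auto
  finally show ?thesis .
qed

lemma hessian_mult:
  assumes t: "t \<ge> 1"
  shows "(\<Sum>j<n. hessian (Suc t) n g y i j * v j) = vol (Suc t) n g ((\<lambda>_. y)(t - 1 := v, t := ebasis i))"
proof -
  have "(\<Sum>j<n. hessian (Suc t) n g y i j * v j) = (\<Sum>j<n. v j * vol (Suc t) n g (((\<lambda>_. y)(t := ebasis i))(t - 1 := ebasis j)))"
    unfolding hessian_def using t by (intro sum.cong refl) (simp add: fun_upd_twist mult.commute)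
  also have "\<dots> = vol (Suc t) n g (((\<lambda>_. y)(t := ebasis i))(t - 1 := v))"
    using vol_slot_expand[of "t - 1" "Suc t" n g "(\<lambda>_. y)(t := ebasis i)" v] t by simp
  finally show ?thesis using t by (simp add: fun_upd_twist)
qed

lemma hessian_mult_self:
  assumes t: "t \<ge> 1"
  shows "(\<Sum>j<n. hessian (Suc t) n g y i j * y j) = vol (Suc t) n g ((\<lambda>_. y)(t := ebasis i))"
proof -
  have "(\<lambda>_. y)(t - 1 := y, t := ebasis i) = (\<lambda>_. y)(t := ebasis i)" by auto
  thus ?thesis using hessian_mult[OF t, of n g y i y] by simp
qed

lemma bform_hessian_Suc:
  assumes t: "t \<ge> 2" and sym: "sym_matrix n g"
  shows "bform n (hessian (Suc t) n g y) v v = (\<Sum>i<n. y i * bform n (vertex_hessian t n g y i) v v)"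
proof -
  have "bform n (hessian (Suc t) n g y) v v = vol (Suc t) n g ((\<lambda>_. y)(Suc t - 2 := v, Suc t - 1 := v))"
    by (rule bform_hessian) (use t in auto)
  also have "(\<lambda>_. y)(Suc t - 2 := v, Suc t - 1 := v) = ((\<lambda>_. y)(t - 1 := v, t := v))(t - 2 := y)"
    using t by (intro ext) auto
  also have "vol (Suc t) n g \<dots> = (\<Sum>i<n. y i * vol (Suc t) n g (((\<lambda>_. y)(t - 1 := v, t := v))(t - 2 := ebasis i)))"
    by (rule vol_slot_expand) (use t in auto)
  also have "\<dots> = (\<Sum>i<n. y i * bform n (vertex_hessian t n g y i) v v)"
  proof (intro sum.cong refl arg_cong2[where f="(*)"])
    fix i
    let ?Z = "((\<lambda>_. y)(t - 1 := v, t := v))(t - 2 := ebasis i)"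
    have "vol (Suc t) n g ?Z = vol (Suc t) n g (\<lambda>u. ?Z (Transposition.transpose (t - 2) t u))"
      by (rule vol_transpose[OF sym, symmetric]) (use t in auto)
    also have "(\<lambda>u. ?Z (Transposition.transpose (t - 2) t u)) = ((\<lambda>_. y)(t := ebasis i))(t - 2 := v, t - 1 := v)"
      using t by (intro ext) (auto simp: Transposition.transpose_def)
    also have "vol (Suc t) n g \<dots> = bform n (vertex_hessian t n g y i) v v"
      unfolding vertex_hessian_def by (rule bform_vol_two_slots[symmetric]) (use t in auto)
    finally show "vol (Suc t) n g ?Z = bform n (vertex_hessian t n g y i) v v" .
  qed
  finally show ?thesis .
qed

lemma bform_vertex_hessian:
  assumes t: "t \<ge> 2"
  shows "bform n (vertex_hessian t n g y i) v y = (\<Sum>j<n. hessian (Suc t) n g y i j * v j)"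
proof -
  have "bform n (vertex_hessian t n g y i) v y = vol (Suc t) n g (((\<lambda>_. y)(t := ebasis i))(t - 2 := y, t - 1 := v))"
    unfolding vertex_hessian_def by (rule bform_vol_two_slots) (use t in auto)
  also have "((\<lambda>_. y)(t := ebasis i))(t - 2 := y, t - 1 := v) = (\<lambda>_. y)(t - 1 := v, t := ebasis i)"
    using t by (intro ext) auto
  finally have c: "bform n (vertex_hessian t n g y i) v y = vol (Suc t) n g ((\<lambda>_. y)(t - 1 := v, t := ebasis i))" .
  have t1: "t \<ge> 1" using t by simp
  show ?thesis unfolding hessian_mult[OF t1] by (rule c)
qed

definition positive_block :: "nat \<Rightarrow> (nat \<Rightarrow> nat \<Rightarrow> real) \<Rightarrow> nat set \<Rightarrow> bool" where
  "positive_block n g S \<longleftrightarrow> S \<subseteq> {..<n} \<and> sym_matrix n g \<and>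
     (\<forall>i<n. \<forall>j<n. (i \<in> S \<and> j \<in> S \<longrightarrow> g i j > 0) \<and> (i \<notin> S \<or> j \<notin> S \<longrightarrow> g i j = 0))"

lemma positive_block_nonneg: "positive_block n g S \<Longrightarrow> nonneg_matrix n g"
  unfolding positive_block_def nonneg_matrix_def by (metis less_le order_refl)

lemma positive_block_zero:
  "positive_block n g S \<Longrightarrow> i < n \<Longrightarrow> j < n \<Longrightarrow> i \<notin> S \<or> j \<notin> S \<Longrightarrow> g i j = 0"
  unfolding positive_block_def by blast

lemma positive_block_pos: "positive_block n g S \<Longrightarrow> i \<in> S \<Longrightarrow> j \<in> S \<Longrightarrow> g i j > 0"
  unfolding positive_block_def by blast

lemma vol_pos_if_positive_block:
  assumes gd: "positive_block n g S" and x: "nonneg_vectors t n x"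
    and \<phi>: "\<And>u. u < t \<Longrightarrow> \<phi> u \<in> S" and x\<phi>: "\<And>u. u < t \<Longrightarrow> x u (\<phi> u) > 0"
  shows "vol t n g x > 0"
proof (rule vol_pos[OF positive_block_nonneg[OF gd] x, of "restrict \<phi> {0..<t}"])
  have "\<phi> u < n" if "u < t" for u using \<phi>[OF that] gd unfolding positive_block_def by auto
  thus "restrict \<phi> {0..<t} \<in> {0..<t} \<rightarrow>\<^sub>E {0..<n}" by auto
  show "g (restrict \<phi> {0..<t} u) (restrict \<phi> {0..<t} v) > 0" if "(u, v) \<in> edges_K t" for u v
    using that \<phi> positive_block_pos[OF gd] unfolding edges_K_def by auto
  show "x u (restrict \<phi> {0..<t} u) > 0" if "u < t" for u using that x\<phi> by simp
qed

lemma hessian_pos_on_block: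
  assumes t: "t \<ge> 2" and gd: "positive_block n g S" and ij: "i \<in> S" "j \<in> S"
    and y0: "\<forall>k<n. y k \<ge> 0" and ypos: "\<forall>k\<in>S. y k > 0"
  shows "hessian t n g y i j > 0"
  unfolding hessian_def
proof (rule vol_pos_if_positive_block[OF gd, where \<phi> = "\<lambda>u. if u = t - 2 then j else i"])
  show "nonneg_vectors t n ((\<lambda>_. y)(t - 2 := ebasis j, t - 1 := ebasis i))"
    using y0 unfolding nonneg_vectors_def by (auto simp: ebasis_def)
qed (use t ij ypos in \<open>auto simp: ebasis_def\<close>)

lemma vertex_hessian_sym:
  assumes t: "t \<ge> 2" and sym: "sym_matrix n g" and i: "i < n"
  shows "sym_matrix n (vertex_hessian t n g y i)"
  using hessian_sym[OF sym t, of "\<lambda>m. g m i * y m"] unfolding sym_matrix_def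
  by (auto simp: vertex_hessian_eq[OF t i] algebra_simps)

lemma vertex_hessian_hyperbolic:
  assumes t: "t \<ge> 2" and i: "i < n" and hyp: "hyperbolic n (hessian t n g (\<lambda>m. g m i * y m))"
  shows "hyperbolic n (vertex_hessian t n g y i)"
proof (rule hyperbolic_cong[OF hyperbolic_diag_congruence[OF hyp, of "\<lambda>j. g j i"]])
  fix j k assume "j < n" "k < n"
  thus "g j i * hessian t n g (\<lambda>m. g m i * y m) j k * g k i = vertex_hessian t n g y i j k"
    using vertex_hessian_eq[OF t i] by simp
qed

text \<open>The \<open>y\<close>-row of \<open>K\<^sub>i = vertex_hessian t n g y i\<close> is the \<open>i\<close>-th row of the Hessian \<open>H\<close> of
  \<open>K\<^sub>t\<^sub>+\<^sub>1\<close>, so Cauchy--Schwarz for \<open>K\<^sub>i\<close> bounds \<open>y\<^sub>i K\<^sub>i(v,v)\<close> by \<open>y\<^sub>i (H v)\<^sub>i\<^sup>2 / (H y)\<^sub>i\<close>.\<close>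
lemma vertex_hessian_bound:
  assumes t: "t \<ge> 2" and gd: "positive_block n g S" and i: "i \<in> S"
    and hyp: "hyperbolic n (hessian t n g (\<lambda>m. g m i * y m))"
    and y0: "\<forall>j<n. y j \<ge> 0" and ypos: "\<forall>j\<in>S. y j > 0"
  shows "y i * bform n (vertex_hessian t n g y i) v v
     \<le> (\<Sum>j<n. hessian (Suc t) n g y i j * v j)\<^sup>2 / ((\<Sum>j<n. hessian (Suc t) n g y i j * y j) / y i)"
proof -
  let ?H = "hessian (Suc t) n g y"
  let ?K = "vertex_hessian t n g y i"
  have sym: "sym_matrix n g" and iS: "i < n" using gd i unfolding positive_block_def by auto
  have Kyy: "bform n ?K y y = (\<Sum>j<n. ?H i j * y j)" by (rule bform_vertex_hessian[OF t])
  have Kvy: "bform n ?K y v = (\<Sum>j<n. ?H i j * v j)"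
    using bform_vertex_hessian[OF t, of n g y i v] bform_commute[OF vertex_hessian_sym[OF t sym iS], of y v] by simp
  have Hy: "(\<Sum>j<n. ?H i j * y j) > 0"
    unfolding hessian_mult_self[OF order.trans[OF one_le_numeral t]]
    by (intro vol_pos_if_positive_block[OF gd, where \<phi> = "\<lambda>_. i"])
      (use y0 ypos i in \<open>auto simp: nonneg_vectors_def ebasis_def\<close>)
  have "bform n ?K y y * bform n ?K v v \<le> (bform n ?K y v)\<^sup>2"
    using hyperbolicD[OF vertex_hessian_hyperbolic[OF t iS hyp], of y v] Hy Kyy by simp
  hence "bform n ?K v v \<le> (\<Sum>j<n. ?H i j * v j)\<^sup>2 / (\<Sum>j<n. ?H i j * y j)"
    using Hy unfolding Kyy Kvy by (simp add: field_simps)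
  hence "y i * bform n ?K v v \<le> y i * ((\<Sum>j<n. ?H i j * v j)\<^sup>2 / (\<Sum>j<n. ?H i j * y j))"
    using ypos i by (intro mult_left_mono) auto
  also have "\<dots> = (\<Sum>j<n. ?H i j * v j)\<^sup>2 / ((\<Sum>j<n. ?H i j * y j) / y i)"
    using ypos i by (simp add: field_simps)
  finally show ?thesis .
qed

lemma hessian_weighted_gap:
  assumes t: "t \<ge> 2" and gd: "positive_block n g S"
    and IH: "\<And>y'. \<forall>j<n. y' j \<ge> 0 \<Longrightarrow> hyperbolic n (hessian t n g y')"
    and y0: "\<forall>j<n. y j \<ge> 0" and ypos: "\<forall>j\<in>S. y j > 0"
  shows "bform n (hessian (Suc t) n g y) v v
     \<le> (\<Sum>i\<in>S. (\<Sum>j<n. hessian (Suc t) n g y i j * v j)\<^sup>2 / ((\<Sum>j<n. hessian (Suc t) n g y i j * y j) / y i))"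
proof -
  have sym: "sym_matrix n g" and Sn: "S \<subseteq> {..<n}" using gd unfolding positive_block_def by auto
  let ?K = "vertex_hessian t n g y"
  have "bform n (hessian (Suc t) n g y) v v = (\<Sum>i<n. y i * bform n (?K i) v v)"
    by (rule bform_hessian_Suc[OF t sym])
  also have "\<dots> = (\<Sum>i\<in>S. y i * bform n (?K i) v v)"
  proof (rule sum.mono_neutral_right)
    show "\<forall>i\<in>{..<n} - S. y i * bform n (?K i) v v = 0"
    proof
      fix i assume i: "i \<in> {..<n} - S"
      have "?K i j k = 0" if "j < n" "k < n" for j k
        using vertex_hessian_eq[OF t _ that, of i g y] i positive_block_zero[OF gd that(1), of i] by auto
      thus "y i * bform n (?K i) v v = 0" unfolding bform_def by simp
    qed
  qed (use Sn in auto)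
  also have "\<dots> \<le> (\<Sum>i\<in>S. (\<Sum>j<n. hessian (Suc t) n g y i j * v j)\<^sup>2
                       / ((\<Sum>j<n. hessian (Suc t) n g y i j * y j) / y i))"
  proof (rule sum_mono)
    fix i assume i: "i \<in> S"
    have y': "\<forall>j<n. g j i * y j \<ge> 0"
      using y0 positive_block_nonneg[OF gd] i Sn unfolding nonneg_matrix_def by auto
    show "y i * bform n (?K i) v v \<le> (\<Sum>j<n. hessian (Suc t) n g y i j * v j)\<^sup>2
                       / ((\<Sum>j<n. hessian (Suc t) n g y i j * y j) / y i)"
      by (rule vertex_hessian_bound[OF t gd i IH[OF y'] y0 ypos])
  qed
  finally show ?thesis .
qed

lemma hessian_outside_block:
  assumes t: "t \<ge> 1" and gd: "positive_block n g S" and ij: "i < n" "j < n" "i \<notin> S \<or> j \<notin> S"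
  shows "hessian (Suc t) n g y i j = 0"
  unfolding hessian_Suc[OF t ij(1,2)] using positive_block_zero[OF gd ij(2,1)] ij(3) by auto

lemma vol_tendsto:
  assumes "\<And>i j. ((\<lambda>k. G k i j) \<longlongrightarrow> g i j) F" "\<And>u m. ((\<lambda>k. X k u m) \<longlongrightarrow> x u m) F"
  shows "((\<lambda>k. vol t n (G k) (X k)) \<longlongrightarrow> vol t n g x) F"
  unfolding vol_def case_prod_beta by (intro tendsto_intros assms)

lemma hyperbolic_hessian_step:
  assumes t: "t \<ge> 2" and gd: "positive_block n g S"
    and IH: "\<And>y'. \<forall>j<n. y' j \<ge> 0 \<Longrightarrow> hyperbolic n (hessian t n g y')"
    and y0: "\<forall>j<n. y j \<ge> 0" and ypos: "\<forall>j\<in>S. y j > 0"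
  shows "hyperbolic n (hessian (Suc t) n g y)"
proof (rule hyperbolic_if_weighted_gap)
  show "sym_matrix n (hessian (Suc t) n g y)"
    using gd t by (intro hessian_sym) (auto simp: positive_block_def)
  show "S \<subseteq> {..<n}" using gd by (simp add: positive_block_def)
  show "hessian (Suc t) n g y i j > 0" if "i \<in> S" "j \<in> S" for i j
    using t that y0 ypos by (intro hessian_pos_on_block[OF _ gd]) auto
  show "hessian (Suc t) n g y i j = 0" if "i < n" "j < n" "i \<notin> S \<or> j \<notin> S" for i j
    using t that by (intro hessian_outside_block[OF _ gd]) auto
  show "y i > 0" if "i \<in> S" for i using ypos that by simp
  show "bform n (hessian (Suc t) n g y) v v \<le> (\<Sum>i\<in>S. (\<Sum>j<n. hessian (Suc t) n g y i j * v j)\<^sup>2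
          / ((\<Sum>j<n. hessian (Suc t) n g y i j * y j) / y i))" for v
    by (rule hessian_weighted_gap[OF t gd IH y0 ypos])
qed


lemma rank_one_perturbation_positive_block:
  assumes gn: "nonneg_matrix n g" and sym: "sym_matrix n g" and c: "c > 0"
  defines "r \<equiv> \<lambda>i. \<Sum>j<n. g i j"
  shows "positive_block n (\<lambda>i j. g i j + c * r i * r j) {i. i < n \<and> r i > 0}"
  unfolding positive_block_def
proof (intro conjI allI impI)
  let ?S = "{i. i < n \<and> r i > 0}"
  have r0: "r i \<ge> 0" if "i < n" for i unfolding r_def using gn that unfolding nonneg_matrix_def by (auto intro: sum_nonneg)
  have rz: "g i j = 0" if "i < n" "j < n" "r i = 0" for i j
  proof -
    have "(\<Sum>j<n. g i j) = 0" using that unfolding r_def by simp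
    hence "\<forall>j\<in>{..<n}. g i j = 0" using gn that(1) unfolding nonneg_matrix_def by (subst (asm) sum_nonneg_eq_0_iff) auto
    thus ?thesis using that by auto
  qed
  have gsym: "g i j = g j i" if "i < n" "j < n" for i j using sym that unfolding sym_matrix_def by auto
  show "?S \<subseteq> {..<n}" by auto
  show "sym_matrix n (\<lambda>i j. g i j + c * r i * r j)" unfolding sym_matrix_def using gsym by (auto simp: mult.commute)
  fix i j assume ij: "i < n" "j < n"
  { assume "i \<in> ?S \<and> j \<in> ?S"
    hence "c * r i * r j > 0" using c by auto
    moreover have "g i j \<ge> 0" using gn ij unfolding nonneg_matrix_def by auto
    ultimately show "g i j + c * r i * r j > 0" by linarith }
  { assume "i \<notin> ?S \<or> j \<notin> ?S"
    hence "r i = 0 \<or> r j = 0" using r0 ij by force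
    thus "g i j + c * r i * r j = 0" using rz[OF ij] rz[OF ij(2,1)] gsym[OF ij] by auto }
qed

text \<open>\<open>g\<close> is negative semidefinite on the hyperplane orthogonal to \<open>r = g 1\<close> (apply
  hyperbolicity with \<open>x = 1\<close>), and adding \<open>c r r\<^sup>T\<close> does not change the form there.\<close>
lemma rank_one_perturbation_hyperbolic:
  assumes gn: "nonneg_matrix n g" and sym: "sym_matrix n g" and hg: "hyperbolic n g"
  defines "r \<equiv> \<lambda>i. \<Sum>j<n. g i j"
  shows "hyperbolic n (\<lambda>i j. g i j + c * r i * r j)"
proof (rule hyperbolic_if_nonpos_on_hyperplane[of _ _ r])
  have gsym: "g i j = g j i" if "i < n" "j < n" for i j using sym that unfolding sym_matrix_def by auto
  show "sym_matrix n (\<lambda>i j. g i j + c * r i * r j)" unfolding sym_matrix_def using gsym by (auto simp: mult.commute)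
  fix v assume v: "(\<Sum>i<n. r i * v i) = 0"
  have "bform n (\<lambda>i j. g i j + c * r i * r j) v v = bform n g v v + c * (\<Sum>i<n. r i * v i)\<^sup>2"
    unfolding bform_def by (simp add: algebra_simps sum.distrib sum_distrib_left power2_eq_square sum_product)
  moreover have "bform n g v v \<le> 0"
  proof (cases "bform n g (\<lambda>_. 1) (\<lambda>_. 1) > 0")
    case True
    have "bform n g (\<lambda>_. 1) v = (\<Sum>j<n. r j * v j)"
      unfolding bform_def r_def by (subst sum.swap) (auto simp: sum_distrib_right gsym intro!: sum.cong)
    hence "bform n g (\<lambda>_. 1) v = 0" using v by simp
    thus ?thesis using hg True unfolding hyperbolic_def
      by (metis mult_le_0_iff not_less power2_eq_square mult_zero_left)
  next
    case False
    have "bform n g (\<lambda>_. 1) (\<lambda>_. 1) = (\<Sum>i<n. r i)" unfolding bform_def r_def by simp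
    hence "(\<Sum>i<n. r i) \<le> 0" using False by simp
    moreover have "r i \<ge> 0" if "i < n" for i unfolding r_def using gn that unfolding nonneg_matrix_def by (auto intro: sum_nonneg)
    ultimately have "\<forall>i\<in>{..<n}. r i = 0" by (subst sum_nonneg_eq_0_iff[symmetric]) (auto intro: antisym sum_nonneg)
    have "g i j = 0" if "i < n" "j < n" for i j
    proof -
      have "(\<Sum>j<n. g i j) = 0" using \<open>\<forall>i\<in>{..<n}. r i = 0\<close> that unfolding r_def by simp
      thus ?thesis using gn that unfolding nonneg_matrix_def by (subst (asm) sum_nonneg_eq_0_iff) auto
    qed
    hence "bform n g v v = 0" unfolding bform_def by simp
    thus ?thesis by simp
  qed
  ultimately show "bform n (\<lambda>i j. g i j + c * r i * r j) v v \<le> 0" using v by simp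
qed

lemma hessian_perturbation_tendsto:
  assumes c: "c \<longlonglongrightarrow> 0"
  shows "(\<lambda>k. hessian t n (\<lambda>i j. g i j + c k * r i * r j) (\<lambda>j. y j + c k) i j) \<longlonglongrightarrow> hessian t n g y i j"
  unfolding hessian_def
proof (rule vol_tendsto)
  show "(\<lambda>k. g a b + c k * r a * r b) \<longlonglongrightarrow> g a b" for a b
    using c by (auto intro!: tendsto_eq_intros)
  show "(\<lambda>k. ((\<lambda>_ j. y j + c k)(t - 2 := ebasis j, t - 1 := ebasis i)) u m)
      \<longlonglongrightarrow> ((\<lambda>_. y)(t - 2 := ebasis j, t - 1 := ebasis i)) u m" for u m
    using c by (cases "u = t - 1"; cases "u = t - 2") (auto intro!: tendsto_eq_intros)
qed

theorem hyperbolic_hessian: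
  assumes "t \<ge> 2"
  shows "nonneg_matrix n g \<Longrightarrow> sym_matrix n g \<Longrightarrow> hyperbolic n g \<Longrightarrow> \<forall>j<n. y j \<ge> 0 \<Longrightarrow>
    hyperbolic n (hessian t n g y)"
  using assms
proof (induction t arbitrary: g y rule: nat_induct_at_least)
  case base
  show ?case
  proof (rule hyperbolic_cong[OF base.prems(3)])
    fix i j assume "i < n" "j < n"
    thus "g i j = hessian 2 n g y i j" using hessian_2 base.prems(2) unfolding sym_matrix_def by auto
  qed
next
  case (Suc t)
  define c where "c k = inverse (real (Suc k))" for k
  define r where "r i = (\<Sum>j<n. g i j)" for i
  define gk where "gk k i j = g i j + c k * r i * r j" for k i j
  define yk where "yk k j = y j + c k" for k j
  have cpos: "c k > 0" for k unfolding c_def by simp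
  have c0: "c \<longlonglongrightarrow> 0" unfolding c_def by (rule LIMSEQ_inverse_real_of_nat)
  have hk: "hyperbolic n (hessian (Suc t) n (gk k) (yk k))" for k
  proof -
    have gd: "positive_block n (gk k) {i. i < n \<and> r i > 0}"
      using rank_one_perturbation_positive_block[OF Suc.prems(1,2) cpos[of k]] unfolding gk_def r_def .
    have hyk: "hyperbolic n (gk k)"
      using rank_one_perturbation_hyperbolic[OF Suc.prems(1,2,3)] unfolding gk_def r_def .
    have "nonneg_matrix n (gk k)" by (rule positive_block_nonneg[OF gd])
    moreover have "sym_matrix n (gk k)" using gd by (simp add: positive_block_def)
    ultimately have IH: "t \<ge> 2 \<Longrightarrow> \<forall>j<n. y' j \<ge> 0 \<Longrightarrow> hyperbolic n (hessian t n (gk k) y')" for y'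
      using Suc.IH[OF _ _ hyk] by blast
    show ?thesis
    proof (rule hyperbolic_hessian_step[OF Suc.hyps(1) gd])
      show "\<And>y'. \<forall>j<n. 0 \<le> y' j \<Longrightarrow> hyperbolic n (hessian t n (gk k) y')"
        by (rule IH) (use Suc.hyps in auto)
      show "\<forall>j<n. 0 \<le> yk k j" using Suc.prems(4) cpos[of k] unfolding yk_def by (auto intro: add_nonneg_nonneg less_imp_le)
      show "\<forall>j\<in>{i. i < n \<and> 0 < r i}. 0 < yk k j" using Suc.prems(4) cpos[of k] unfolding yk_def
        by (auto intro: add_nonneg_pos)
    qed
  qed
  show ?case
    by (rule hyperbolic_limit[OF hk]) (unfold gk_def yk_def, rule hessian_perturbation_tendsto[OF c0])
qed

section \<open>Concavity along segments\<close>

lemma powr_add_one: "0 < x \<Longrightarrow> x powr (a + 1) = x powr a * (x :: real)"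
  by (simp add: powr_add)

text \<open>The derivative of \<open>f\<^sup>1\<^sup>/\<^sup>t\<close> is \<open>f\<^sup>1\<^sup>/\<^sup>t\<^sup>-\<^sup>1 f\<^sub>1\<close>; its own derivative has the sign of \<open>f f\<^sub>2 - f\<^sub>1\<^sup>2\<close>.\<close>
lemma root_slope_deriv_nonpos:
  fixes f f1 f2 :: "real \<Rightarrow> real" and t :: nat
  assumes t: "t \<ge> 1" and fp: "f s > 0"
    and df: "(f has_real_derivative real t * f1 s) (at s)"
    and df1: "(f1 has_real_derivative real (t - 1) * f2 s) (at s)"
    and ineq: "f s * f2 s \<le> (f1 s)\<^sup>2"
  shows "\<exists>D. ((\<lambda>s. f s powr (1 / real t - 1) * f1 s) has_real_derivative D) (at s) \<and> D \<le> 0"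
proof -
  define r where "r = 1 / real t - 1"
  define p where "p = f s powr (r - 1)"
  have p: "p > 0" unfolding p_def using fp by simp
  have pr: "f s powr r = p * f s"
    unfolding p_def using powr_add_one[OF fp, of "r - 1"] by simp
  have p1: "f s powr (r - of_nat 1) = p" unfolding p_def by simp
  have rt: "r * real t = 1 - real t" unfolding r_def using t by (simp add: field_simps)
  have d: "((\<lambda>s. f s powr r * f1 s) has_real_derivative
      (r * f s powr (r - of_nat 1) * (real t * f1 s)) * f1 s + (real (t - 1) * f2 s) * f s powr r) (at s)"
    by (rule DERIV_mult[OF DERIV_fun_powr[OF df fp] df1])
  have "(r * f s powr (r - of_nat 1) * (real t * f1 s)) * f1 s + (real (t - 1) * f2 s) * f s powr r
      = p * (r * real t) * (f1 s)\<^sup>2 + p * (real t - 1) * (f s * f2 s)"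
    unfolding pr p1 using t by (simp add: of_nat_diff power2_eq_square algebra_simps)
  also have "\<dots> = p * (real t - 1) * (f s * f2 s - (f1 s)\<^sup>2)"
    unfolding rt by (simp add: algebra_simps)
  also have "\<dots> \<le> 0"
    using p t ineq by (intro mult_nonneg_nonpos) auto
  finally show ?thesis using d unfolding r_def by blast
qed

text \<open>\<open>f\<^sup>1\<^sup>/\<^sup>t\<close> is concave on \<open>[0, 1]\<close>, hence lies below its tangent at \<open>0\<close>.\<close>
lemma root_below_tangent:
  fixes f f1 f2 :: "real \<Rightarrow> real" and t :: nat
  assumes t: "t \<ge> 1"
    and pos: "\<And>s. 0 \<le> s \<Longrightarrow> s \<le> 1 \<Longrightarrow> f s > 0"
    and df: "\<And>s. (f has_real_derivative real t * f1 s) (at s)"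
    and df1: "\<And>s. (f1 has_real_derivative real (t - 1) * f2 s) (at s)"
    and ineq: "\<And>s. 0 \<le> s \<Longrightarrow> s \<le> 1 \<Longrightarrow> f s * f2 s \<le> (f1 s)\<^sup>2"
  shows "f 1 powr (1 / real t) \<le> f 0 powr (1 / real t - 1) * (f 0 + f1 0)"
proof -
  define \<psi> where "\<psi> s = f s powr (1 / real t)" for s
  define \<psi>' where "\<psi>' s = f s powr (1 / real t - 1) * f1 s" for s
  have d\<psi>: "DERIV \<psi> s :> \<psi>' s" if s: "0 \<le> s" "s \<le> 1" for s
  proof -
    have "DERIV \<psi> s :> 1 / real t * f s powr (1 / real t - of_nat 1) * (real t * f1 s)"
      unfolding \<psi>_def by (rule DERIV_fun_powr[OF df pos[OF s]])
    thus ?thesis unfolding \<psi>'_def by (rule DERIV_cong) (use t in \<open>simp add: field_simps\<close>)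
  qed
  have mono: "\<psi>' x \<le> \<psi>' 0" if x: "0 \<le> x" "x \<le> 1" for x
  proof (rule DERIV_nonpos_imp_nonincreasing[OF x(1)])
    fix s assume "0 \<le> s" "s \<le> x"
    thus "\<exists>D. DERIV \<psi>' s :> D \<and> D \<le> 0"
      unfolding \<psi>'_def using x by (intro root_slope_deriv_nonpos[OF t pos df df1 ineq]) auto
  qed
  obtain z where z: "0 < z" "z < 1" "\<psi> 1 - \<psi> 0 = (1 - 0) * \<psi>' z"
    using MVT2[of 0 1 \<psi> \<psi>'] d\<psi> by auto
  have "\<psi> 1 \<le> \<psi> 0 + \<psi>' 0" using z mono[of z] by simp
  also have "\<psi> 0 = f 0 powr (1 / real t - 1) * f 0"
    unfolding \<psi>_def using powr_add_one[OF pos[of 0], of "1 / real t - 1"] by simp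
  finally show ?thesis unfolding \<psi>_def \<psi>'_def by (simp add: algebra_simps)
qed

lemma power_le_if_root_le:
  fixes x y w :: real
  assumes t: "t \<ge> 1" and x: "x > 0" and y: "y > 0"
    and le: "y powr (1 / real t) \<le> x powr (1 / real t - 1) * w"
  shows "x ^ (t - 1) * y \<le> w ^ t"
proof -
  have t0: "real t > 0" using t by simp
  have xr: "(x powr (1 / real t - 1)) ^ t = x powr (1 - real t)"
  proof -
    have "(x powr (1 / real t - 1)) ^ t = x powr ((1 / real t - 1) * real t)"
      using x by (simp add: powr_realpow[symmetric] powr_powr)
    also have "(1 / real t - 1) * real t = 1 - real t" using t0 by (simp add: field_simps)
    finally show ?thesis .
  qed
  have "y = (y powr (1 / real t)) ^ t"
    using y t0 by (simp add: powr_realpow[symmetric] powr_powr)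
  also have "\<dots> \<le> (x powr (1 / real t - 1) * w) ^ t"
    using le by (intro power_mono) auto
  also have "\<dots> = x powr (1 - real t) * w ^ t" by (simp add: power_mult_distrib xr)
  finally have "y \<le> x powr (1 - real t) * w ^ t" .
  hence "x ^ (t - 1) * y \<le> x ^ (t - 1) * (x powr (1 - real t) * w ^ t)"
    using x by (intro mult_left_mono) auto
  moreover have "x ^ (t - 1) * x powr (1 - real t) = 1"
    using x t by (simp add: powr_realpow[symmetric] of_nat_diff powr_add[symmetric])
  ultimately show ?thesis by (simp add: mult.assoc[symmetric])
qed

lemma vol_deriv:
  "DERIV (\<lambda>s. vol t n g (\<lambda>u m. \<alpha> u m + s * \<beta> u m)) s :>
     (\<Sum>u<t. vol t n g ((\<lambda>u m. \<alpha> u m + s * \<beta> u m)(u := \<beta> u)))"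
proof -
  let ?X = "\<lambda>s u m. \<alpha> u m + s * \<beta> u m"
  let ?W = "\<lambda>\<phi>. (\<Prod>(u,v)\<in>edges_K t. g (\<phi> u) (\<phi> v))"
  let ?P = "{0..<t} \<rightarrow>\<^sub>E {0..<n}"
  have d: "DERIV (\<lambda>s. ?W \<phi> * (\<Prod>u<t. ?X s u (\<phi> u))) s :>
      ?W \<phi> * (\<Sum>u<t. \<beta> u (\<phi> u) * (\<Prod>w\<in>{..<t} - {u}. ?X s w (\<phi> w)))" for \<phi>
  proof (rule DERIV_cmult, rule has_field_derivative_prod)
    fix u
    show "((\<lambda>s. \<alpha> u (\<phi> u) + s * \<beta> u (\<phi> u)) has_field_derivative \<beta> u (\<phi> u)) (at s)"
      by (auto intro!: derivative_eq_intros)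
  qed
  have "DERIV (\<lambda>s. vol t n g (?X s)) s :> (\<Sum>\<phi>\<in>?P. ?W \<phi> * (\<Sum>u<t. \<beta> u (\<phi> u) * (\<Prod>w\<in>{..<t} - {u}. ?X s w (\<phi> w))))"
    unfolding vol_def by (rule DERIV_sum) (rule d)
  also have "(\<Sum>\<phi>\<in>?P. ?W \<phi> * (\<Sum>u<t. \<beta> u (\<phi> u) * (\<Prod>w\<in>{..<t} - {u}. ?X s w (\<phi> w))))
      = (\<Sum>u<t. vol t n g ((?X s)(u := \<beta> u)))"
  proof -
    have "(\<Sum>\<phi>\<in>?P. ?W \<phi> * (\<Sum>u<t. \<beta> u (\<phi> u) * (\<Prod>w\<in>{..<t} - {u}. ?X s w (\<phi> w))))
        = (\<Sum>u<t. \<Sum>\<phi>\<in>?P. ?W \<phi> * \<beta> u (\<phi> u) * (\<Prod>w\<in>{..<t} - {u}. ?X s w (\<phi> w)))"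
      by (subst sum.swap) (simp add: sum_distrib_left mult.assoc)
    also have "\<dots> = (\<Sum>u<t. vol t n g ((?X s)(u := \<beta> u)))"
      by (intro sum.cong refl) (simp add: vol_fun_upd_expand)
    finally show ?thesis .
  qed
  finally show ?thesis .
qed

lemma vol_slot_move:
  assumes sym: "sym_matrix n g" and uv: "u < t" "v < t"
  shows "vol t n g ((\<lambda>_. y)(u := d)) = vol t n g ((\<lambda>_. y)(v := d))"
proof -
  have "vol t n g ((\<lambda>_. y)(u := d)) = vol t n g (\<lambda>w. ((\<lambda>_. y)(u := d)) (Transposition.transpose u v w))"
    by (rule vol_transpose[OF sym uv, symmetric])
  also have "(\<lambda>w. ((\<lambda>_. y)(u := d)) (Transposition.transpose u v w)) = (\<lambda>_. y)(v := d)"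
    by (intro ext) (auto simp: Transposition.transpose_def)
  finally show ?thesis .
qed



lemma vol_line_deriv:
  assumes sym: "sym_matrix n g" and t: "t \<ge> 1"
  shows "DERIV (\<lambda>s. vol t n g (\<lambda>_ m. a m + s * d m)) s :>
           real t * vol t n g ((\<lambda>_ m. a m + s * d m)(t - 1 := d))"
proof -
  have "DERIV (\<lambda>s. vol t n g (\<lambda>u m. a m + s * d m)) s :> (\<Sum>u<t. vol t n g ((\<lambda>u m. a m + s * d m)(u := d)))"
    by (rule vol_deriv)
  also have "(\<Sum>u<t. vol t n g ((\<lambda>u m. a m + s * d m)(u := d)))
      = (\<Sum>u<t. vol t n g ((\<lambda>_ m. a m + s * d m)(t - 1 := d)))"
    using t by (intro sum.cong refl vol_slot_move[OF sym]) auto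
  finally show ?thesis by simp
qed

lemma vol_line_deriv2:
  assumes sym: "sym_matrix n g" and t: "t \<ge> 2"
  shows "DERIV (\<lambda>s. vol t n g ((\<lambda>_ m. a m + s * d m)(t - 1 := d))) s :>
           real (t - 1) * vol t n g ((\<lambda>_ m. a m + s * d m)(t - 2 := d, t - 1 := d))"
proof -
  obtain r where r: "t = Suc r" using t by (cases t) auto
  define \<alpha> where "\<alpha> u = (if u = t - 1 then d else a)" for u
  define \<beta> where "\<beta> u = (if u = t - 1 then (\<lambda>_. 0) else d)" for u
  let ?X = "\<lambda>s u m. \<alpha> u m + s * \<beta> u m"
  have e: "(\<lambda>_ m. a m + s * d m)(t - 1 := d) = ?X s" for s
    unfolding \<alpha>_def \<beta>_def by (intro ext) auto
  have "DERIV (\<lambda>s. vol t n g (?X s)) s :> (\<Sum>u<t. vol t n g ((?X s)(u := \<beta> u)))"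
    by (rule vol_deriv)
  also have "(\<Sum>u<t. vol t n g ((?X s)(u := \<beta> u)))
      = (\<Sum>u<r. vol t n g ((?X s)(u := \<beta> u))) + vol t n g ((?X s)(r := \<beta> r))"
    unfolding r by (rule sum.lessThan_Suc)
  also have "vol t n g ((?X s)(r := \<beta> r)) = 0"
    using r vol_slot_zero[of r t n g "?X s"] unfolding \<beta>_def by simp
  also have "(\<Sum>u<r. vol t n g ((?X s)(u := \<beta> u)))
      = (\<Sum>u<r. vol t n g ((\<lambda>_ m. a m + s * d m)(t - 2 := d, t - 1 := d)))"
  proof (intro sum.cong refl)
    fix u assume u: "u \<in> {..<r}"
    let ?Z = "((\<lambda>_ m. a m + s * d m)(t - 1 := d))(u := d)"
    have "(?X s)(u := \<beta> u) = ?Z" using u r unfolding \<alpha>_def \<beta>_def by (intro ext) auto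
    moreover have "vol t n g ?Z = vol t n g (\<lambda>w. ?Z (Transposition.transpose u (t - 2) w))"
      by (rule vol_transpose[OF sym, symmetric]) (use u r t in auto)
    moreover have "(\<lambda>w. ?Z (Transposition.transpose u (t - 2) w)) = (\<lambda>_ m. a m + s * d m)(t - 2 := d, t - 1 := d)"
      using u r t by (intro ext) (auto simp: Transposition.transpose_def)
    ultimately show "vol t n g ((?X s)(u := \<beta> u)) = vol t n g ((\<lambda>_ m. a m + s * d m)(t - 2 := d, t - 1 := d))"
      by simp
  qed
  finally show ?thesis unfolding e using r by simp
qed

lemma vol_reverse_cauchy_schwarz:
  assumes t: "t \<ge> 2" and gn: "nonneg_matrix n g" and sym: "sym_matrix n g" and hg: "hyperbolic n g"
    and y0: "\<forall>j<n. y j \<ge> 0" and pos: "vol t n g (\<lambda>_. y) > 0"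
  shows "vol t n g (\<lambda>_. y) * vol t n g ((\<lambda>_. y)(t - 2 := d, t - 1 := d)) \<le> (vol t n g ((\<lambda>_. y)(t - 1 := d)))\<^sup>2"
proof -
  let ?H = "hessian t n g y"
  have yy: "bform n ?H y y = vol t n g (\<lambda>_. y)"
    unfolding bform_hessian[OF t] by (intro arg_cong[where f="vol t n g"] ext) (use t in auto)
  moreover have "bform n ?H y d = vol t n g ((\<lambda>_. y)(t - 1 := d))"
  proof -
    have "bform n ?H y d = vol t n g ((\<lambda>_. y)(t - 2 := d))"
      unfolding bform_hessian[OF t] by (intro arg_cong[where f="vol t n g"] ext) (use t in auto)
    also have "\<dots> = vol t n g ((\<lambda>_. y)(t - 1 := d))" by (rule vol_slot_move[OF sym]) (use t in auto)
    finally show ?thesis .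
  qed
  moreover have "bform n ?H d d = vol t n g ((\<lambda>_. y)(t - 2 := d, t - 1 := d))"
    unfolding bform_hessian[OF t] ..
  ultimately show ?thesis
    using hyperbolicD[OF hyperbolic_hessian[OF t gn sym hg y0], of y d] pos unfolding yy by simp
qed

lemma vol_segment_pos:
  assumes gn: "nonneg_matrix n g" and a0: "\<forall>j<n. a j \<ge> 0" and b0: "\<forall>j<n. b j \<ge> 0"
    and pa: "vol t n g (\<lambda>_. a) > 0" and pb: "vol t n g (\<lambda>_. b) > 0" and s: "0 \<le> s" "s \<le> 1"
  shows "vol t n g (\<lambda>_ m. (1 - s) * a m + s * b m) > 0"
proof (cases "s < 1")
  case True
  have "0 < (1 - s) ^ t * vol t n g (\<lambda>_. a)" using True pa by simp
  also have "\<dots> = vol t n g (\<lambda>_ m. (1 - s) * a m)"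
    using vol_scale[of t n g "\<lambda>_. 1 - s" "\<lambda>_. a"] by simp
  also have "\<dots> \<le> vol t n g (\<lambda>_ m. (1 - s) * a m + s * b m)"
    using gn s a0 b0 True by (intro vol_mono) (auto simp: nonneg_vectors_def)
  finally show ?thesis .
next
  case False
  hence "s = 1" using s by simp
  thus ?thesis using pb by simp
qed

lemma vol_minkowski:
  assumes t: "t \<ge> 2" and gn: "nonneg_matrix n g" and sym: "sym_matrix n g" and hg: "hyperbolic n g"
    and a0: "\<forall>j<n. a j \<ge> 0" and b0: "\<forall>j<n. b j \<ge> 0"
  shows "vol t n g (\<lambda>_. a) ^ (t - 1) * vol t n g (\<lambda>_. b) \<le> vol t n g ((\<lambda>_. a)(t - 1 := b)) ^ t"
proof (cases "vol t n g (\<lambda>_. a) > 0 \<and> vol t n g (\<lambda>_. b) > 0")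
  case False
  moreover have "vol t n g (\<lambda>_. a) \<ge> 0" "vol t n g (\<lambda>_. b) \<ge> 0" "vol t n g ((\<lambda>_. a)(t - 1 := b)) \<ge> 0"
    using gn a0 b0 by (auto intro!: vol_nonneg simp: nonneg_vectors_def)
  moreover have "t - 1 \<noteq> 0" using t by simp
  ultimately show ?thesis by (auto simp: power_0_left)
next
  case True
  define d where "d m = b m - a m" for m
  define f where "f s = vol t n g (\<lambda>_ m. a m + s * d m)" for s
  define f1 where "f1 s = vol t n g ((\<lambda>_ m. a m + s * d m)(t - 1 := d))" for s
  define f2 where "f2 s = vol t n g ((\<lambda>_ m. a m + s * d m)(t - 2 := d, t - 1 := d))" for s
  have seg: "(\<lambda>m. a m + s * d m) = (\<lambda>m. (1 - s) * a m + s * b m)" for s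
    unfolding d_def by (auto simp: algebra_simps)
  have seg0: "\<forall>j<n. a j + s * d j \<ge> 0" if "0 \<le> s" "s \<le> 1" for s
  proof (intro allI impI)
    fix j assume "j < n"
    hence "0 \<le> (1 - s) * a j + s * b j" using that a0 b0 by (intro add_nonneg_nonneg mult_nonneg_nonneg) auto
    thus "0 \<le> a j + s * d j" unfolding d_def by (simp add: algebra_simps)
  qed
  have fpos: "vol t n g (\<lambda>_ m. a m + s * d m) > 0" if "0 \<le> s" "s \<le> 1" for s
    unfolding seg using vol_segment_pos[OF gn a0 b0 _ _ that] True by simp
  have "f 1 powr (1 / real t) \<le> f 0 powr (1 / real t - 1) * (f 0 + f1 0)"
  proof (rule root_below_tangent)
    show "1 \<le> t" using t by simp
    show "f s > 0" if "0 \<le> s" "s \<le> 1" for s unfolding f_def by (rule fpos[OF that])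
    show "(f has_real_derivative real t * f1 s) (at s)" for s
      unfolding f_def f1_def by (rule vol_line_deriv[OF sym]) (use t in simp)
    show "(f1 has_real_derivative real (t - 1) * f2 s) (at s)" for s
      unfolding f1_def f2_def by (rule vol_line_deriv2[OF sym t])
    show "f s * f2 s \<le> (f1 s)\<^sup>2" if "0 \<le> s" "s \<le> 1" for s
      unfolding f_def f1_def f2_def by (rule vol_reverse_cauchy_schwarz[OF t gn sym hg seg0[OF that] fpos[OF that]])
  qed
  moreover have "f 0 = vol t n g (\<lambda>_. a)" "f 1 = vol t n g (\<lambda>_. b)" unfolding f_def d_def by simp_all
  moreover have "f 0 + f1 0 = vol t n g ((\<lambda>_. a)(t - 1 := b))"
    unfolding f_def f1_def d_def using vol_slot_add_diff[of "t - 1" t n g "\<lambda>_. a" b] t by simp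
  ultimately show ?thesis using True t by (intro power_le_if_root_le) auto
qed

lemma vol_first_to_last:
  assumes "sym_matrix n g" "t \<ge> 1"
  shows "vol t n g (\<lambda>u. if u = 0 then y else x) = vol t n g ((\<lambda>_. x)(t - 1 := y))"
proof -
  have e: "(\<lambda>u. if u = 0 then y else x) = (\<lambda>_. x)(0 := y)" by auto
  show ?thesis unfolding e by (rule vol_slot_move[OF assms(1)]) (use assms(2) in auto)
qed

lemma mult_le_if_power_bounds:
  fixes x y p q :: real
  assumes t: "t \<ge> 1" and nonneg: "0 \<le> x" "0 \<le> y" "0 \<le> p" "0 \<le> q"
    and px: "x ^ (t - 1) * y \<le> p ^ t" and qy: "y ^ (t - 1) * x \<le> q ^ t"
  shows "x * y \<le> p * q"
proof -
  obtain k where k: "t = Suc k" using t by (cases t) auto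
  have "(x * y) ^ t = (x ^ (t - 1) * y) * (y ^ (t - 1) * x)"
    unfolding k by (simp add: power_mult_distrib mult_ac)
  also have "\<dots> \<le> p ^ t * q ^ t" using px qy nonneg by (intro mult_mono) auto
  also have "\<dots> = (p * q) ^ t" by (simp add: power_mult_distrib)
  finally have "(x * y) ^ Suc k \<le> (p * q) ^ Suc k" unfolding k .
  thus ?thesis by (rule power_le_imp_le_base) (use nonneg in simp)
qed

theorem corollary4p2:
  fixes n t :: nat and G :: "real mat" and a b :: "nat \<Rightarrow> real"
  assumes "antiferromagnetic n G"
    and "t \<ge> 1"
    and "\<forall>i<n. a i \<ge> 0" and "\<forall>i<n. b i \<ge> 0"
  shows "volume_Kt t n G (\<lambda>u. if u = 0 then b else a) * volume_Kt t n G (\<lambda>u. if u = 0 then a else b)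
         \<ge> volume_Kt t n G (\<lambda>u. a) * volume_Kt t n G (\<lambda>u. b)"
proof -
  let ?g = "\<lambda>i j. G $$ (i,j)"
  have gn: "nonneg_matrix n ?g" and sym: "sym_matrix n ?g" and hg: "hyperbolic n ?g"
    using assms(1) weighted_graph_sym_matrix antiferromagnetic_hyperbolic
    unfolding antiferromagnetic_def weighted_graph_def nonneg_matrix_def by auto
  show ?thesis
  proof (cases "t = 1")
    case True
    thus ?thesis unfolding volume_Kt_eq_vol by (simp add: vol_1)
  next
    case False
    hence t: "t \<ge> 2" using assms(2) by simp
    show ?thesis unfolding volume_Kt_eq_vol vol_first_to_last[OF sym assms(2)]
    proof (rule mult_le_if_power_bounds)
      show "vol t n ?g (\<lambda>_. a) ^ (t - 1) * vol t n ?g (\<lambda>_. b) \<le> vol t n ?g ((\<lambda>_. a)(t - 1 := b)) ^ t"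
        by (rule vol_minkowski[OF t gn sym hg assms(3,4)])
      show "vol t n ?g (\<lambda>_. b) ^ (t - 1) * vol t n ?g (\<lambda>_. a) \<le> vol t n ?g ((\<lambda>_. b)(t - 1 := a)) ^ t"
        by (rule vol_minkowski[OF t gn sym hg assms(4,3)])
    qed (use assms(2-4) in \<open>auto intro!: vol_nonneg[OF gn] simp: nonneg_vectors_def\<close>)
  qed
qed

end
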